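(* Let $f_1,\dots,f_T\in\mathcal F_X(\alpha,l,G)$ be arbitrary, and run RHGD and RHAG (defined in the context) with prediction window $W\ge 0$ and stepsizes $\gamma=1/l$, $\eta=1/L$, where $L=l+4\beta$. Then $$\mathrm{Reg}(\mathrm{RHGD},\mathcal L_T)\le Q_f\,\delta\Big(1-\frac{1}{Q_f}\Big)^{W}L_T,\qquad \mathrm{Reg}(\mathrm{RHAG},\mathcal L_T)\le 2\delta\Big(1-\frac{1}{\sqrt{Q_f}}\Big)^{W}L_T,$$ where $\mathcal L_T=\mathcal L_T(L_T,\mathcal F_X(\alpha,l,G))$, $\delta=(\beta/l+1)\frac{G}{1-\kappa}$, $\kappa=\sqrt{1-\alpha/l}$ and $Q_f=\frac{l+4\beta}{\alpha}$.
   Context: Setting: $X\subseteq\mathbb R^n$ is nonempty, compact and convex with diameter $D$, i.e. $\|x-y\|\le D$ for all $x,y\in X$. The parameter $\beta\ge 0$, the initial point $x_0\in X$, and the horizon $T\ge 1$ are fixed, and $\Pi_X$ denotes Euclidean projection onto $X$. Function class: for $0<\alpha\le l$ and $G>0$, $\mathcal F_X(\alpha,l,G)$ is the set of differentiable $f:\mathbb R^n\to\mathbb R$ such that for all $x,y\in\mathbb R^n$ $$f(x)+\langle\nabla f(x),y-x\rangle+\tfrac{\alpha}{2}\|y-x\|^2\le f(y)\le f(x)+\langle\nabla f(x),y-x\rangle+\tfrac{l}{2}\|y-x\|^2,$$ and $\|\nabla f(x)\|\le G$ for all $x\in X$. Total cost: $C_1^T(x)=\sum_{t=1}^T\big(f_t(x_t)+\frac\beta2\|x_t-x_{t-1}\|^2\big)$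 for $x=(x_1,\dots,x_T)$, with $x_0$ the given initial point. Path length: let $\theta_t=\arg\min_{x\in X}f_t(x)$ and $\theta_0=x_0$. For $0\le L_T\le DT$, $\mathcal L_T(L_T,\mathcal F_X(\alpha,l,G))$ is the set of sequences $\{f_t\}_{t=1}^T\subseteq\mathcal F_X(\alpha,l,G)$ with $\sum_{t=1}^T\|\theta_t-\theta_{t-1}\|\le L_T$. Dynamic regret: for an algorithm producing outputs $x^{\mathcal A}=(x^{\mathcal A}_1,\dots,x^{\mathcal A}_T)$ (with $x_0^{\mathcal A}=x_0$), $$\mathrm{Reg}(\mathcal A,\mathcal L_T)=\sup_{\{f_t\}\in\mathcal L_T}\Big(C_1^T(x^{\mathcal A})-\min_{x\in X^T}C_1^T(x)\Big).$$ Partial gradients: for $t<T$, $g_t(a,b,c)=\nabla f_t(b)+\beta(2b-a-c)$; for $t=T$, $g_T(a,b,c)=\nabla f_T(b)+\beta(b-a)$, which does not depend on $c$. RHGD (Receding Horizon Gradient Descent). For each $t\in[T]$ it produces iterates $x_t^s$ for $s=t-W,\dots,t$. - Initialization (online gradient descent): $x_1^{1-W}=x_0$, and for $2\le t\le T$, $$x_t^{t-W}=\Pi_X\big(x_{t-1}^{t-1-W}-\gamma\nabla f_{t-1}(x_{t-1}^{t-1-W})\big).$$ - Updates: for $s=t-W+1,\dots,t$, $$x_t^s=\Pi_X\big(x_t^{s-1}-\eta\, g_t(x_{t-1}^{s-2},x_t^{s-1},x_{t+1}^{s})\big),$$ with the convention $x_0^{s}=x_0$ for all $s$. At each stage $s$,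 the indices $t$ are processed in decreasing order. - Output at stage $t$: $x_t^t$. RHAG (Receding Horizon Accelerated Gradient). Set $\lambda=\frac{1-\sqrt{\alpha\eta}}{1+\sqrt{\alpha\eta}}$. - Initialization: $x_t^{t-W}$ is defined as in RHGD, and $y_t^{t-W}=x_t^{t-W}$. - Updates: for $s=t-W+1,\dots,t$, $$x_t^s=\Pi_X\big(y_t^{s-1}-\eta\, g_t(y_{t-1}^{s-2},y_t^{s-1},y_{t+1}^s)\big),\qquad y_t^s=(1+\lambda)x_t^s-\lambda x_t^{s-1},$$ with the convention $y_0^s=x_0$. - Output at stage $t$: $x_t^t$. *)

theory Defs
  imports "HOL-Analysis.Analysis"
begin

definition grad :: "('a::euclidean_space \<Rightarrow> real) \<Rightarrow> 'a \<Rightarrow> 'a" where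
  "grad f x = (SOME g. (f has_derivative (\<lambda>h. g \<bullet> h)) (at x))"

definition Fclass :: "'a::euclidean_space set \<Rightarrow> real \<Rightarrow> real \<Rightarrow> real \<Rightarrow> ('a \<Rightarrow> real) set" where
  "Fclass X \<alpha> l G = {f. (\<forall>x. f differentiable (at x)) \<and>
     (\<forall>x y. f x + grad f x \<bullet> (y - x) + \<alpha> / 2 * (norm (y - x))\<^sup>2 \<le> f y \<and>
            f y \<le> f x + grad f x \<bullet> (y - x) + l / 2 * (norm (y - x))\<^sup>2) \<and>
     (\<forall>x\<in>X. norm (grad f x) \<le> G)}"

definition theta :: "'a::euclidean_space set \<Rightarrow> 'a \<Rightarrow> (nat \<Rightarrow> 'a \<Rightarrow> real) \<Rightarrow> nat \<Rightarrow> 'a" where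
  "theta X x0 fs t = (if t = 0 then x0 else arg_min_on (fs t) X)"

definition pathset :: "'a::euclidean_space set \<Rightarrow> 'a \<Rightarrow> nat \<Rightarrow> real \<Rightarrow> real \<Rightarrow> real \<Rightarrow> real
    \<Rightarrow> (nat \<Rightarrow> 'a \<Rightarrow> real) set" where
  "pathset X x0 T \<alpha> l G Lpath = {fs. (\<forall>t\<in>{1..T}. fs t \<in> Fclass X \<alpha> l G) \<and>
      (\<Sum>t=1..T. norm (theta X x0 fs t - theta X x0 fs (t - 1))) \<le> Lpath}"

definition cost :: "real \<Rightarrow> nat \<Rightarrow> 'a::euclidean_space \<Rightarrow> (nat \<Rightarrow> 'a \<Rightarrow> real) \<Rightarrow> (nat \<Rightarrow> 'a) \<Rightarrow> real" where
  "cost \<beta> T x0 fs x = (\<Sum>t=1..T. fs t (x t) + \<beta> / 2 * (norm (x t - (x(0 := x0)) (t - 1)))\<^sup>2)"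

definition opt_cost :: "'a::euclidean_space set \<Rightarrow> real \<Rightarrow> nat \<Rightarrow> 'a \<Rightarrow> (nat \<Rightarrow> 'a \<Rightarrow> real) \<Rightarrow> real" where
  "opt_cost X \<beta> T x0 fs = (INF x \<in> {x. \<forall>t\<in>{1..T}. x t \<in> X}. cost \<beta> T x0 fs x)"

definition Reg :: "'a::euclidean_space set \<Rightarrow> real \<Rightarrow> nat \<Rightarrow> 'a \<Rightarrow> real \<Rightarrow> real \<Rightarrow> real \<Rightarrow> real
    \<Rightarrow> ((nat \<Rightarrow> 'a \<Rightarrow> real) \<Rightarrow> nat \<Rightarrow> 'a) \<Rightarrow> ereal" where
  "Reg X \<beta> T x0 \<alpha> l G Lpath alg =
     (SUP fs \<in> pathset X x0 T \<alpha> l G Lpath. ereal (cost \<beta> T x0 fs (alg fs) - opt_cost X \<beta> T x0 fs))"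

fun ogd :: "'a::euclidean_space set \<Rightarrow> (nat \<Rightarrow> 'a \<Rightarrow> real) \<Rightarrow> 'a \<Rightarrow> real \<Rightarrow> nat \<Rightarrow> 'a" where
  "ogd X fs x0 \<gamma> 0 = x0"
| "ogd X fs x0 \<gamma> (Suc 0) = x0"
| "ogd X fs x0 \<gamma> (Suc (Suc k)) =
     closest_point X (ogd X fs x0 \<gamma> (Suc k) - \<gamma> *\<^sub>R grad (fs (Suc k)) (ogd X fs x0 \<gamma> (Suc k)))"

context
  fixes X :: "'a::euclidean_space set" and fs :: "nat \<Rightarrow> 'a \<Rightarrow> real" and x0 :: 'a
    and T W :: nat and \<beta> \<gamma> \<eta> lam :: real
begin

(* RHGD iterate x_t^s (t :: nat, s :: int); x_0^s = x0; x_t^{t-W} from OGD *)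
function rhgd_it :: "nat \<Rightarrow> int \<Rightarrow> 'a" where
  "rhgd_it t s =
    (if t = 0 \<or> t > T then x0
     else if s \<le> int t - int W then ogd X fs x0 \<gamma> t
     else
       (let a = rhgd_it (t - 1) (s - 2);
            b = rhgd_it t (s - 1);
            g = (if t = T then grad (fs t) b + \<beta> *\<^sub>R (b - a)
                 else grad (fs t) b + \<beta> *\<^sub>R (2 *\<^sub>R b - a - rhgd_it (t + 1) s))
        in closest_point X (b - \<eta> *\<^sub>R g)))"
  by pat_completeness auto
termination
  by (relation "measures [\<lambda>(t, s). nat (s + int W), \<lambda>(t, s). T - t]") auto

function rhag_it :: "nat \<Rightarrow> int \<Rightarrow> 'a \<times> 'a" where
  "rhag_it t s =
    (if t = 0 \<or> t > T then (x0, x0)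
     else if s \<le> int t - int W then (ogd X fs x0 \<gamma> t, ogd X fs x0 \<gamma> t)
     else
       (let a = snd (rhag_it (t - 1) (s - 2));
            p = rhag_it t (s - 1);
            b = snd p;
            g = (if t = T then grad (fs t) b + \<beta> *\<^sub>R (b - a)
                 else grad (fs t) b + \<beta> *\<^sub>R (2 *\<^sub>R b - a - snd (rhag_it (t + 1) s)));
            x = closest_point X (b - \<eta> *\<^sub>R g)
        in (x, (1 + lam) *\<^sub>R x - lam *\<^sub>R fst p)))"
  by pat_completeness auto
termination
  by (relation "measures [\<lambda>(t, s). nat (s + int W), \<lambda>(t, s). T - t]") auto

end

definition RHGD :: "'a::euclidean_space set \<Rightarrow> 'a \<Rightarrow> nat \<Rightarrow> nat \<Rightarrow> real \<Rightarrow> real \<Rightarrow> real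
    \<Rightarrow> (nat \<Rightarrow> 'a \<Rightarrow> real) \<Rightarrow> nat \<Rightarrow> 'a" where
  "RHGD X x0 T W \<beta> \<gamma> \<eta> fs t = rhgd_it X fs x0 T W \<beta> \<gamma> \<eta> t (int t)"

definition RHAG :: "'a::euclidean_space set \<Rightarrow> 'a \<Rightarrow> nat \<Rightarrow> nat \<Rightarrow> real \<Rightarrow> real \<Rightarrow> real \<Rightarrow> real
    \<Rightarrow> (nat \<Rightarrow> 'a \<Rightarrow> real) \<Rightarrow> nat \<Rightarrow> 'a" where
  "RHAG X x0 T W \<beta> \<gamma> \<eta> \<alpha> fs t =
     fst (rhag_it X fs x0 T W \<beta> \<gamma> \<eta>
           ((1 - sqrt (\<alpha> * \<eta>)) / (1 + sqrt (\<alpha> * \<eta>))) t (int t))"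

end

theory Submission
  imports Defs "HOL-Library.Function_Algebras"
begin

(* Stage s of RHGD (of RHAG) is one step of projected gradient descent (of Nesterov's accelerated
   projected gradient method) with step 1/L, L = l + 4\<beta>, applied to the total cost C as a function
   of the whole trajectory (x_1, ..., x_T), started at the online gradient descent trajectory.
   For the inner product \<Sum>t. u_t \<bullet> v_t the cost C is \<alpha>-strongly convex and L-smooth, so W stages
   shrink the optimality gap of the OGD trajectory by Q_f (1 - 1/Q_f)^W, resp. 2 (1 - 1/sqrt Q_f)^W.
   That gap is at most \<delta> L_T: a step of OGD contracts the distance to the current minimiser \<theta>_t by
   \<kappa>, so \<Sum>t. |x_t - \<theta>_t| \<le> L_T / (1 - \<kappa>), and C(OGD) exceeds \<Sum>t. f_t(\<theta>_t) \<le> min C by at most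
   G |x_t - \<theta>_t| per hitting cost plus \<beta> G / l |x_(t-1) - \<theta>_(t-1)| per switching cost. *)

instantiation "fun" :: (type, real_vector) real_vector
begin
definition scaleR_fun :: "real \<Rightarrow> ('a \<Rightarrow> 'b) \<Rightarrow> 'a \<Rightarrow> 'b" where
  "scaleR_fun c f = (\<lambda>x. c *\<^sub>R f x)"
instance
  by standard (auto simp: scaleR_fun_def fun_eq_iff scaleR_add_right scaleR_add_left)
end

lemma scaleR_fun_apply [simp]: "(c *\<^sub>R f) x = c *\<^sub>R f x"
  by (simp add: scaleR_fun_def)

section \<open>Gradient steps in a semi-inner product space\<close>

text \<open>Trajectories are functions on all of \<open>nat\<close> of which only \<open>t \<in> {1..T}\<close> matters, so their
  inner product is degenerate; this is why the gradient steps are developed for semi-inner products.\<close>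

locale semi_inner =
  fixes ip :: "'v::real_vector \<Rightarrow> 'v \<Rightarrow> real"
  assumes ip_add_left: "ip (x + y) z = ip x z + ip y z"
    and ip_scaleR_left: "ip (c *\<^sub>R x) z = c * ip x z"
    and ip_commute: "ip x y = ip y x"
    and ip_self_nonneg: "ip x x \<ge> 0"
    and ip_self_eq_0D: "ip x x = 0 \<Longrightarrow> ip x y = 0"
begin

lemma ip_add_right: "ip z (x + y) = ip z x + ip z y"
  using ip_add_left ip_commute by metis
lemma ip_scaleR_right: "ip z (c *\<^sub>R x) = c * ip z x"
  using ip_scaleR_left ip_commute by metis
lemma ip_zero_left: "ip 0 z = 0"
  using ip_scaleR_left[of 0] by simp
lemma ip_zero_right: "ip z 0 = 0"
  using ip_zero_left ip_commute by metis
lemma ip_minus_left: "ip (- x) z = - ip x z"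
  using ip_scaleR_left[of "-1"] by simp
lemma ip_minus_right: "ip z (- x) = - ip z x"
  using ip_minus_left ip_commute by metis
lemma ip_diff_left: "ip (x - y) z = ip x z - ip y z"
  using ip_add_left[of x "-y"] ip_minus_left by simp
lemma ip_diff_right: "ip z (x - y) = ip z x - ip z y"
  using ip_diff_left ip_commute by metis

lemmas ip_simps = ip_add_left ip_add_right ip_scaleR_left ip_scaleR_right ip_zero_left
  ip_zero_right ip_minus_left ip_minus_right ip_diff_left ip_diff_right

lemma ip_self_diff_commute: "ip (a - b) (a - b) = ip (b - a) (b - a)"
  by (simp add: ip_simps ip_commute[of a b])

text \<open>The hypothesis \<open>proj\<close> is the variational inequality characterising \<open>xp\<close> as the projection
  of \<open>y - g/L\<close>.\<close>

lemma projected_gradient_ineq: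
  assumes L: "L > 0"
    and lower: "f z \<ge> f y + ip g (z - y) + \<alpha> / 2 * ip (z - y) (z - y)"
    and upper: "f xp \<le> f y + ip g (xp - y) + L / 2 * ip (xp - y) (xp - y)"
    and proj: "ip (y - (1 / L) *\<^sub>R g - xp) (z - xp) \<le> 0"
  shows "f z \<ge> f xp + ip (L *\<^sub>R (y - xp)) (z - y)
           + ip (L *\<^sub>R (y - xp)) (L *\<^sub>R (y - xp)) / (2 * L) + \<alpha> / 2 * ip (z - y) (z - y)"
proof -
  define d where "d = xp - y"
  define e where "e = z - y"
  have xp: "xp = y + d" and z: "z = y + e" by (simp_all add: d_def e_def)
  have "y - (1 / L) *\<^sub>R g - xp = - d - (1 / L) *\<^sub>R g" "z - xp = e - d"
    by (simp_all add: xp z)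
  with proj have "- ip d e + ip d d - (1 / L) * ip g e + (1 / L) * ip g d \<le> 0"
    by (simp add: ip_simps ip_commute[of e d] ip_commute[of d g] ip_commute[of e g])
  then have "L * (- ip d e + ip d d - (1 / L) * ip g e + (1 / L) * ip g d) \<le> 0"
    using L by (simp add: mult_le_0_iff)
  then have proj': "- L * ip d e + L * ip d d - ip g e + ip g d \<le> 0"
    using L by (simp add: algebra_simps)
  have yxp: "y - xp = - d" by (simp add: xp)
  have rhs: "ip (L *\<^sub>R (y - xp)) (z - y) + ip (L *\<^sub>R (y - xp)) (L *\<^sub>R (y - xp)) / (2 * L)
     = - L * ip d e + L / 2 * ip d d"
    unfolding yxp e_def[symmetric] using L by (simp add: ip_simps power2_eq_square field_simps)
  have "f z \<ge> f xp + (- L * ip d e + L / 2 * ip d d) + \<alpha> / 2 * ip e e"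
    using lower upper proj' by (simp add: d_def e_def)
  then show ?thesis using rhs by (simp add: e_def)
qed

lemma projected_gradient_dist_decrease:
  assumes L: "L > 0"
    and ineq: "f xs \<ge> f xp + ip g (xs - y) + ip g g / (2 * L) + \<alpha> / 2 * ip (xs - y) (xs - y)"
    and g: "g = L *\<^sub>R (y - xp)"
  shows "ip (xp - xs) (xp - xs) \<le> (1 - \<alpha> / L) * ip (y - xs) (y - xs) - (2 / L) * (f xp - f xs)"
proof -
  define b where "b = y - xs"
  have xp: "xp - xs = b - (1 / L) *\<^sub>R g" using L by (simp add: g b_def algebra_simps)
  have dist: "ip (xp - xs) (xp - xs) = ip b b - 2 / L * ip g b + ip g g / L^2"
    unfolding xp by (simp add: ip_simps ip_commute[of b g] power2_eq_square algebra_simps)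
  have "xs - y = - b" by (simp add: b_def)
  then have ineq': "ip g b \<ge> f xp - f xs + ip g g / (2 * L) + \<alpha> / 2 * ip b b"
    using ineq by (simp add: ip_minus_left ip_minus_right)
  have "(2 / L) * ip g b \<ge> (2 / L) * (f xp - f xs + ip g g / (2 * L) + \<alpha> / 2 * ip b b)"
    using ineq' L by (intro mult_left_mono) auto
  also have "(2 / L) * (f xp - f xs + ip g g / (2 * L) + \<alpha> / 2 * ip b b)
     = (2 / L) * (f xp - f xs) + ip g g / L^2 + (\<alpha> / L) * ip b b"
    using L by (simp add: field_simps power2_eq_square)
  finally show ?thesis unfolding dist b_def[symmetric] by (simp add: algebra_simps)
qed

text \<open>One step of Nesterov's method in estimate-sequence form: \<open>v\<close> and \<open>v'\<close> are the estimate points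
  before and after the step, \<open>q = sqrt (\<alpha>/L)\<close>, and \<open>hz\<close> says that \<open>y\<close> lies on the segment
  between \<open>xk\<close> and \<open>v\<close>, namely \<open>(1 + q) y = xk + q v\<close>.\<close>

lemma accelerated_gradient_step:
  assumes L: "L > 0" and q: "0 < q" "q \<le> 1" and qa: "q^2 = \<alpha> / L"
    and ineq_k: "f xk \<ge> f xp + ip g (xk - y) + ip g g / (2 * L) + \<alpha> / 2 * ip (xk - y) (xk - y)"
    and ineq_s: "f xs \<ge> f xp + ip g (xs - y) + ip g g / (2 * L) + \<alpha> / 2 * ip (xs - y) (xs - y)"
    and hv: "v' - xs = ((1 - q) *\<^sub>R (v - xs) + q *\<^sub>R (y - xs)) - (q / \<alpha>) *\<^sub>R g"
    and hz: "(1 - q) *\<^sub>R (xk - y) + q *\<^sub>R (xs - y) + q *\<^sub>R ((1 - q) *\<^sub>R (v - xs) + q *\<^sub>R (y - xs)) = 0"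
  shows "f xp - f xs + \<alpha> / 2 * ip (v' - xs) (v' - xs)
     \<le> (1 - q) * (f xk - f xs + \<alpha> / 2 * ip (v - xs) (v - xs))"
proof -
  have al: "\<alpha> = q^2 * L" using qa L by (simp add: field_simps)
  then have al0: "\<alpha> > 0" using q L by simp
  define a where "a = v - xs"
  define b where "b = y - xs"
  define w where "w = (1 - q) *\<^sub>R a + q *\<^sub>R b"
  have hv': "v' - xs = w - (q / \<alpha>) *\<^sub>R g" using hv by (simp add: w_def a_def b_def)
  have v': "ip (v' - xs) (v' - xs) = ip w w - 2 * (q / \<alpha>) * ip g w + (q / \<alpha>)^2 * ip g g"
    unfolding hv' by (simp add: ip_simps ip_commute[of w g] power2_eq_square algebra_simps)
  have w_convex: "ip w w \<le> (1 - q) * ip a a + q * ip b b"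
  proof -
    have "(1 - q) * ip a a + q * ip b b - ip w w = q * (1 - q) * ip (a - b) (a - b)"
      unfolding w_def by (simp add: ip_simps ip_commute[of b a] algebra_simps power2_eq_square)
    moreover have "0 \<le> q * (1 - q) * ip (a - b) (a - b)"
      using q ip_self_nonneg by simp
    ultimately show ?thesis by linarith
  qed
  have "(1 - q) *\<^sub>R (xk - y) + q *\<^sub>R (xs - y) + q *\<^sub>R w = 0"
    using hz by (simp add: w_def a_def b_def)
  from arg_cong[OF this, of "ip g"]
  have g_comb: "(1 - q) * ip g (xk - y) + q * ip g (xs - y) + q * ip g w = 0"
    by (simp add: ip_simps)
  have "f xk \<ge> f xp + ip g (xk - y) + ip g g / (2 * L)"
  proof -
    have "0 \<le> \<alpha> / 2 * ip (xk - y) (xk - y)" using al0 ip_self_nonneg by simp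
    then show ?thesis using ineq_k by linarith
  qed
  then have h1: "(1 - q) * f xk \<ge> (1 - q) * (f xp + ip g (xk - y) + ip g g / (2 * L))"
    using q by (intro mult_left_mono) auto
  have h2: "q * f xs \<ge> q * (f xp + ip g (xs - y) + ip g g / (2 * L) + \<alpha> / 2 * ip b b)"
    using ineq_s q ip_self_diff_commute[of xs y] by (intro mult_left_mono) (auto simp: b_def)
  have h3: "\<alpha> / 2 * ip w w \<le> \<alpha> / 2 * ((1 - q) * ip a a + q * ip b b)"
    using w_convex al0 by (intro mult_left_mono) auto
  have h4: "\<alpha> / 2 * ((q / \<alpha>)^2 * ip g g) = ip g g / (2 * L)"
    and h5: "\<alpha> / 2 * (2 * (q / \<alpha>) * ip g w) = q * ip g w"
    using al0 L al q by (simp_all add: field_simps power2_eq_square)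
  have "f xp - f xs + \<alpha> / 2 * ip (v' - xs) (v' - xs)
      = f xp - f xs + \<alpha> / 2 * ip w w - q * ip g w + ip g g / (2 * L)"
    unfolding v' using h4 h5 by (simp add: algebra_simps)
  also have "\<dots> \<le> (1 - q) * (f xk - f xs + \<alpha> / 2 * ip a a)"
  proof -
    have "(1 - q) * (f xk - f xs + \<alpha> / 2 * ip a a)
        - (f xp - f xs + \<alpha> / 2 * ip w w - q * ip g w + ip g g / (2 * L))
      = ((1 - q) * f xk - (1 - q) * (f xp + ip g (xk - y) + ip g g / (2 * L)))
      + (q * f xs - q * (f xp + ip g (xs - y) + ip g g / (2 * L) + \<alpha> / 2 * ip b b))
      + (\<alpha> / 2 * ((1 - q) * ip a a + q * ip b b) - \<alpha> / 2 * ip w w)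
      + ((1 - q) * ip g (xk - y) + q * ip g (xs - y) + q * ip g w)"
      using L by (simp add: field_simps)
    then show ?thesis using h1 h2 h3 g_comb by linarith
  qed
  finally show ?thesis by (simp add: a_def)
qed

end

section \<open>The total cost as a function of the trajectory\<close>

definition traj_inner :: "nat \<Rightarrow> (nat \<Rightarrow> 'a::real_inner) \<Rightarrow> (nat \<Rightarrow> 'a) \<Rightarrow> real" where
  "traj_inner T u v = (\<Sum>t=1..T. u t \<bullet> v t)"

interpretation traj_inner: semi_inner "traj_inner T"
proof
  fix x y z :: "nat \<Rightarrow> 'a" and c :: real
  show "traj_inner T (x + y) z = traj_inner T x z + traj_inner T y z"
    by (simp add: traj_inner_def inner_add_left sum.distrib)
  show "traj_inner T (c *\<^sub>R x) z = c * traj_inner T x z"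
    by (simp add: traj_inner_def sum_distrib_left)
  show "traj_inner T x y = traj_inner T y x"
    by (simp add: traj_inner_def inner_commute)
  show "traj_inner T x x \<ge> 0"
    unfolding traj_inner_def by (intro sum_nonneg) auto
  assume "traj_inner T x x = 0"
  then have "\<forall>t\<in>{1..T}. x t \<bullet> x t = 0"
    unfolding traj_inner_def by (subst sum_nonneg_eq_0_iff[symmetric]) auto
  then show "traj_inner T x y = 0" by (simp add: traj_inner_def)
qed

interpretation inner: semi_inner "inner :: 'a::real_inner \<Rightarrow> 'a \<Rightarrow> real"
proof
  fix x y z :: 'a
  show "(x + y) \<bullet> z = x \<bullet> z + y \<bullet> z" by (rule inner_add_left)
  show "x \<bullet> y = y \<bullet> x" by (rule inner_commute)
qed simp_all

lemma sum_prev_le: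
  fixes h :: "nat \<Rightarrow> real"
  assumes "h 0 = 0" "\<And>t. h t \<ge> 0"
  shows "(\<Sum>t=1..n. h (t - 1)) \<le> (\<Sum>t=1..n. h t)"
proof -
  have "(\<Sum>t=1..n. h (t - 1)) + h n = (\<Sum>t=1..n. h t) + h 0"
    by (induction n) auto
  then show ?thesis using assms by (metis add.right_neutral le_add_same_cancel1)
qed

lemma sum_inner_prev_eq:
  fixes u d :: "nat \<Rightarrow> 'a::real_inner"
  shows "(\<Sum>t=1..n. u t \<bullet> (if t = 1 then 0 else d (t - 1)))
       = (\<Sum>t=1..n. (if t < n then u (t + 1) \<bullet> d t else 0))"
proof (induction n)
  case 0
  then show ?case by simp
next
  case (Suc n)
  have "(\<Sum>t=1..n. (if t < n then u (t + 1) \<bullet> d t else 0)) + (if n \<ge> 1 then u (n + 1) \<bullet> d n else 0)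
     = (\<Sum>t=1..n. u (t + 1) \<bullet> d t)"
    by (cases n) simp_all
  then show ?case using Suc.IH by (cases "n = 0") (simp_all add: sum.cl_ivl_Suc)
qed

definition cost_grad :: "(nat \<Rightarrow> 'a::euclidean_space \<Rightarrow> real) \<Rightarrow> 'a \<Rightarrow> nat \<Rightarrow> real \<Rightarrow> (nat \<Rightarrow> 'a)
    \<Rightarrow> nat \<Rightarrow> 'a" where
  "cost_grad fs x0 T \<beta> x t = grad (fs t) (x t) + \<beta> *\<^sub>R ((x t - (if t = 1 then x0 else x (t - 1)))
       - (if t < T then x (t + 1) - x t else 0))"

lemma cost_altdef: "cost \<beta> T x0 fs x
    = (\<Sum>t=1..T. fs t (x t) + \<beta> / 2 * (norm (x t - (if t = 1 then x0 else x (t - 1))))\<^sup>2)"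
  unfolding cost_def by (intro sum.cong) auto

lemma cost_cong:
  assumes xy: "\<And>t. t \<in> {1..T} \<Longrightarrow> x t = y t"
  shows "cost \<beta> T x0 fs x = cost \<beta> T x0 fs y"
  unfolding cost_altdef
proof (intro sum.cong refl)
  fix t assume t: "t \<in> {1..T}"
  then have "t \<noteq> 1 \<Longrightarrow> x (t - 1) = y (t - 1)" by (intro xy) auto
  then show "fs t (x t) + \<beta> / 2 * (norm (x t - (if t = 1 then x0 else x (t - 1))))\<^sup>2 =
        fs t (y t) + \<beta> / 2 * (norm (y t - (if t = 1 then x0 else y (t - 1))))\<^sup>2"
    using xy[OF t] by auto
qed

lemma cost_expansion:
  fixes x y :: "nat \<Rightarrow> 'a::euclidean_space"
  shows "cost \<beta> T x0 fs y = cost \<beta> T x0 fs x + traj_inner T (cost_grad fs x0 T \<beta> x) (y - x)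
     + (\<Sum>t=1..T. fs t (y t) - fs t (x t) - grad (fs t) (x t) \<bullet> (y t - x t))
     + \<beta> / 2 * (\<Sum>t=1..T. (norm ((y t - x t) - (if t = 1 then 0 else y (t - 1) - x (t - 1))))\<^sup>2)"
proof -
  define u where "u t = x t - (if t = 1 then x0 else x (t - 1))" for t
  define d where "d t = y t - x t" for t
  define w where "w t = d t - (if t = 1 then 0 else d (t - 1))" for t
  have sq: "(norm (y t - (if t = 1 then x0 else y (t - 1))))\<^sup>2
      = (norm (u t))\<^sup>2 + 2 * (u t \<bullet> w t) + (norm (w t))\<^sup>2" for t
  proof -
    have "y t - (if t = 1 then x0 else y (t - 1)) = u t + w t"
      by (simp add: u_def w_def d_def)
    then show ?thesis by (simp add: power2_norm_eq_inner inner_add_left inner_add_right inner_commute)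
  qed
  have uw: "(\<Sum>t=1..T. u t \<bullet> w t)
      = (\<Sum>t=1..T. u t \<bullet> d t) - (\<Sum>t=1..T. (if t < T then u (t + 1) \<bullet> d t else 0))"
  proof -
    have "(\<Sum>t=1..T. u t \<bullet> w t) = (\<Sum>t=1..T. u t \<bullet> d t - u t \<bullet> (if t = 1 then 0 else d (t - 1)))"
      unfolding w_def by (simp add: inner_diff_right)
    then show ?thesis using sum_inner_prev_eq[of u d T] by (simp add: sum_subtractf)
  qed
  have "traj_inner T (cost_grad fs x0 T \<beta> x) (y - x) = (\<Sum>t=1..T. grad (fs t) (x t) \<bullet> d t
       + \<beta> * (u t \<bullet> d t - (if t < T then u (t + 1) \<bullet> d t else 0)))"
    unfolding traj_inner_def
  proof (intro sum.cong refl)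
    fix t assume "t \<in> {1..T}"
    then have "u (t + 1) = x (t + 1) - x t" by (simp add: u_def)
    then show "cost_grad fs x0 T \<beta> x t \<bullet> (y - x) t = grad (fs t) (x t) \<bullet> d t
       + \<beta> * (u t \<bullet> d t - (if t < T then u (t + 1) \<bullet> d t else 0))"
      by (simp add: cost_grad_def u_def d_def inner_add_left inner_diff_left)
  qed
  then have grad_d: "traj_inner T (cost_grad fs x0 T \<beta> x) (y - x) = (\<Sum>t=1..T. grad (fs t) (x t) \<bullet> d t)
      + \<beta> * ((\<Sum>t=1..T. u t \<bullet> d t) - (\<Sum>t=1..T. (if t < T then u (t + 1) \<bullet> d t else 0)))"
    by (simp add: sum.distrib right_diff_distrib sum_subtractf sum_distrib_left)
  have cy: "cost \<beta> T x0 fs y = (\<Sum>t=1..T. fs t (y t)) + \<beta> / 2 * (\<Sum>t=1..T. (norm (u t))\<^sup>2)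
      + \<beta> * (\<Sum>t=1..T. u t \<bullet> w t) + \<beta> / 2 * (\<Sum>t=1..T. (norm (w t))\<^sup>2)"
    unfolding cost_altdef sq by (simp add: sum.distrib sum_distrib_left algebra_simps)
  have cx: "cost \<beta> T x0 fs x = (\<Sum>t=1..T. fs t (x t)) + \<beta> / 2 * (\<Sum>t=1..T. (norm (u t))\<^sup>2)"
    unfolding cost_altdef u_def by (simp add: sum.distrib sum_distrib_left)
  have "norm ((y t - x t) - (if t = 1 then 0 else y (t - 1) - x (t - 1))) = norm (w t)" for t
    by (simp add: w_def d_def)
  then show ?thesis unfolding cy cx uw grad_d
    by (simp add: d_def sum.distrib sum_subtractf algebra_simps)
qed

lemma FclassD:
  assumes "f \<in> Fclass X \<alpha> l G"
  shows "f x + grad f x \<bullet> (y - x) + \<alpha> / 2 * (norm (y - x))\<^sup>2 \<le> f y"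
    and "f y \<le> f x + grad f x \<bullet> (y - x) + l / 2 * (norm (y - x))\<^sup>2"
    and "x \<in> X \<Longrightarrow> norm (grad f x) \<le> G"
    and "continuous_on UNIV f"
  using assms unfolding Fclass_def
  by (auto intro: differentiable_imp_continuous_within continuous_at_imp_continuous_on)

lemma norm_diff_sq_le: "(norm (a - b))\<^sup>2 \<le> 2 * (norm a)\<^sup>2 + 2 * (norm (b::'a::real_inner))\<^sup>2"
proof -
  have "(norm (a - b))\<^sup>2 + (norm (a + b))\<^sup>2 = 2 * (norm a)\<^sup>2 + 2 * (norm b)\<^sup>2"
    by (simp add: power2_norm_eq_inner inner_add_left inner_add_right inner_diff_left
        inner_diff_right inner_commute)
  moreover have "0 \<le> (norm (a + b))\<^sup>2" by simp
  ultimately show ?thesis by linarith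
qed

lemma sum_sq_norm_increment_le:
  fixes d :: "nat \<Rightarrow> 'a::real_inner"
  shows "(\<Sum>t=1..T. (norm (d t - (if t = 1 then 0 else d (t - 1))))\<^sup>2) \<le> 4 * traj_inner T d d"
proof -
  define h where "h s = (if s = 0 then 0 else (norm (d s))\<^sup>2)" for s
  have "(\<Sum>t=1..T. (norm (d t - (if t = 1 then 0 else d (t - 1))))\<^sup>2)
      \<le> (\<Sum>t=1..T. 2 * (norm (d t))\<^sup>2 + 2 * h (t - 1))"
  proof (intro sum_mono)
    fix t assume "t \<in> {1..T}"
    then have "(norm (if t = 1 then 0 else d (t - 1)))\<^sup>2 = h (t - 1)" by (auto simp: h_def)
    then show "(norm (d t - (if t = 1 then 0 else d (t - 1))))\<^sup>2 \<le> 2 * (norm (d t))\<^sup>2 + 2 * h (t - 1)"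
      using norm_diff_sq_le[of "d t" "if t = 1 then 0 else d (t - 1)"] by simp
  qed
  also have "\<dots> = 2 * (\<Sum>t=1..T. (norm (d t))\<^sup>2) + 2 * (\<Sum>t=1..T. h (t - 1))"
    by (simp add: sum.distrib sum_distrib_left)
  also have "(\<Sum>t=1..T. h (t - 1)) \<le> (\<Sum>t=1..T. h t)"
    by (rule sum_prev_le) (auto simp: h_def)
  also have "(\<Sum>t=1..T. h t) = (\<Sum>t=1..T. (norm (d t))\<^sup>2)"
    by (intro sum.cong) (auto simp: h_def)
  finally show ?thesis by (simp add: traj_inner_def power2_norm_eq_inner)
qed

context
  fixes X :: "'a::euclidean_space set" and x0 :: 'a and fs :: "nat \<Rightarrow> 'a \<Rightarrow> real"
    and T :: nat and \<beta> \<alpha> l G :: real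
  assumes Fc: "\<forall>t\<in>{1..T}. fs t \<in> Fclass X \<alpha> l G" and \<beta>: "\<beta> \<ge> 0"
begin

lemma cost_strongly_convex:
  "cost \<beta> T x0 fs y \<ge> cost \<beta> T x0 fs x + traj_inner T (cost_grad fs x0 T \<beta> x) (y - x)
     + \<alpha> / 2 * traj_inner T (y - x) (y - x)"
proof -
  have "(\<Sum>t=1..T. \<alpha> / 2 * ((y - x) t \<bullet> (y - x) t))
      \<le> (\<Sum>t=1..T. fs t (y t) - fs t (x t) - grad (fs t) (x t) \<bullet> (y t - x t))"
  proof (intro sum_mono)
    fix t assume "t \<in> {1..T}"
    from FclassD(1)[of "fs t", of X \<alpha> l G "x t" "y t"] Fc this
    show "\<alpha> / 2 * ((y - x) t \<bullet> (y - x) t) \<le> fs t (y t) - fs t (x t) - grad (fs t) (x t) \<bullet> (y t - x t)"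
      by (simp add: power2_norm_eq_inner)
  qed
  moreover have "0 \<le> \<beta> / 2 * (\<Sum>t=1..T. (norm ((y t - x t) - (if t = 1 then 0 else y (t - 1) - x (t - 1))))\<^sup>2)"
    using \<beta> by (intro mult_nonneg_nonneg sum_nonneg) auto
  ultimately show ?thesis
    using cost_expansion[of \<beta> T x0 fs y x] by (simp add: traj_inner_def sum_distrib_left)
qed

lemma cost_smooth:
  "cost \<beta> T x0 fs y \<le> cost \<beta> T x0 fs x + traj_inner T (cost_grad fs x0 T \<beta> x) (y - x)
     + (l + 4 * \<beta>) / 2 * traj_inner T (y - x) (y - x)"
proof -
  have "(\<Sum>t=1..T. fs t (y t) - fs t (x t) - grad (fs t) (x t) \<bullet> (y t - x t))
      \<le> (\<Sum>t=1..T. l / 2 * ((y - x) t \<bullet> (y - x) t))"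
  proof (intro sum_mono)
    fix t assume "t \<in> {1..T}"
    from FclassD(2)[of "fs t", of X \<alpha> l G "y t" "x t"] Fc this
    show "fs t (y t) - fs t (x t) - grad (fs t) (x t) \<bullet> (y t - x t) \<le> l / 2 * ((y - x) t \<bullet> (y - x) t)"
      by (simp add: power2_norm_eq_inner)
  qed
  moreover have "(\<Sum>t=1..T. l / 2 * ((y - x) t \<bullet> (y - x) t)) = l / 2 * traj_inner T (y - x) (y - x)"
    by (simp add: traj_inner_def sum_distrib_left)
  moreover have "\<beta> / 2 * (\<Sum>t=1..T. (norm ((y t - x t) - (if t = 1 then 0 else y (t - 1) - x (t - 1))))\<^sup>2)
      \<le> \<beta> / 2 * (4 * traj_inner T (y - x) (y - x))"
    using sum_sq_norm_increment_le[of "\<lambda>t. y t - x t" T] \<beta>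
    by (intro mult_left_mono) (auto simp: fun_diff_def)
  ultimately show ?thesis using cost_expansion[of \<beta> T x0 fs y x] by (simp add: algebra_simps)
qed

lemma cost_projected_gradient_ineq:
  assumes X: "convex X" "closed X" and l: "l > 0"
    and z: "\<forall>t\<in>{1..T}. z t \<in> X"
    and xp: "\<forall>t\<in>{1..T}. xp t = closest_point X (y t - (1 / (l + 4 * \<beta>)) *\<^sub>R cost_grad fs x0 T \<beta> y t)"
  shows "cost \<beta> T x0 fs z \<ge> cost \<beta> T x0 fs xp + traj_inner T ((l + 4 * \<beta>) *\<^sub>R (y - xp)) (z - y)
    + traj_inner T ((l + 4 * \<beta>) *\<^sub>R (y - xp)) ((l + 4 * \<beta>) *\<^sub>R (y - xp)) / (2 * (l + 4 * \<beta>))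
    + \<alpha> / 2 * traj_inner T (z - y) (z - y)"
proof (rule traj_inner.projected_gradient_ineq)
  show "l + 4 * \<beta> > 0" using l \<beta> by simp
  show "traj_inner T (y - (1 / (l + 4 * \<beta>)) *\<^sub>R cost_grad fs x0 T \<beta> y - xp) (z - xp) \<le> 0"
    unfolding traj_inner_def
  proof (intro sum_nonpos)
    fix t assume t: "t \<in> {1..T}"
    define a where "a = y t - (1 / (l + 4 * \<beta>)) *\<^sub>R cost_grad fs x0 T \<beta> y t"
    have "(a - closest_point X a) \<bullet> (z t - closest_point X a) \<le> 0"
      using X z t by (intro any_closest_point_dot) (auto intro: closest_point_in_set closest_point_le)
    then show "(y - (1 / (l + 4 * \<beta>)) *\<^sub>R cost_grad fs x0 T \<beta> y - xp) t \<bullet> (z - xp) t \<le> 0"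
      using xp t by (simp add: a_def)
  qed
qed (rule cost_strongly_convex, rule cost_smooth)

end

lemma continuous_on_cost:
  assumes "\<And>t. t \<in> {1..T} \<Longrightarrow> continuous_on UNIV (fs t)"
  shows "continuous_on UNIV (cost \<beta> T x0 fs)"
  unfolding cost_altdef
proof (intro continuous_on_sum continuous_on_add continuous_on_mult continuous_on_const)
  fix t assume t: "t \<in> {1..T}"
  show "continuous_on UNIV (\<lambda>x. fs t (x t))"
    using continuous_on_compose2[OF assms[OF t] continuous_on_product_coordinates[of t]] by simp
  show "continuous_on UNIV (\<lambda>x. (norm (x t - (if t = 1 then x0 else x (t - 1))))\<^sup>2)"
    by (cases "t = 1") (auto intro!: continuous_intros continuous_on_product_coordinates)
qed

lemma cost_attains_min:
  fixes X :: "'a::euclidean_space set" and fs :: "nat \<Rightarrow> 'a \<Rightarrow> real"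
  assumes X: "compact X" and x0: "x0 \<in> X"
    and cont: "\<And>t. t \<in> {1..T} \<Longrightarrow> continuous_on UNIV (fs t)"
  obtains xs where "\<forall>t\<in>{1..T}. xs t \<in> X" and "opt_cost X \<beta> T x0 fs = cost \<beta> T x0 fs xs"
    and "\<And>z. \<forall>t\<in>{1..T}. z t \<in> X \<Longrightarrow> cost \<beta> T x0 fs xs \<le> cost \<beta> T x0 fs z"
proof -
  define S where "S t = (if t \<in> {1..T} then X else {x0})" for t
  define K where "K = PiE UNIV S"
  have "compactin (product_topology (\<lambda>i. euclidean) UNIV) K"
    unfolding K_def compactin_PiE using X by (auto simp: S_def)
  then have "compact K" by (simp add: euclidean_product_topology)
  moreover have "(\<lambda>_. x0) \<in> K" using x0 by (auto simp: K_def S_def)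
  moreover have "continuous_on K (cost \<beta> T x0 fs)"
    using continuous_on_subset[OF continuous_on_cost[OF cont] subset_UNIV] .
  ultimately obtain xs where xsK: "xs \<in> K"
    and xs_le: "\<And>y. y \<in> K \<Longrightarrow> cost \<beta> T x0 fs xs \<le> cost \<beta> T x0 fs y"
    using continuous_attains_inf[of K "cost \<beta> T x0 fs"] by blast
  have xsX: "\<forall>t\<in>{1..T}. xs t \<in> X"
  proof
    fix t assume t: "t \<in> {1..T}"
    have "xs t \<in> S t" using xsK by (auto simp: K_def PiE_iff)
    then show "xs t \<in> X" using t by (simp add: S_def)
  qed
  have min: "cost \<beta> T x0 fs xs \<le> cost \<beta> T x0 fs z" if z: "\<forall>t\<in>{1..T}. z t \<in> X" for z
  proof -
    define z' where "z' t = (if t \<in> {1..T} then z t else x0)" for t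
    have "z' \<in> K" using z x0 by (auto simp: K_def S_def z'_def)
    then have "cost \<beta> T x0 fs xs \<le> cost \<beta> T x0 fs z'" by (rule xs_le)
    also have "cost \<beta> T x0 fs z' = cost \<beta> T x0 fs z" by (rule cost_cong) (simp add: z'_def)
    finally show ?thesis .
  qed
  have opt: "opt_cost X \<beta> T x0 fs = cost \<beta> T x0 fs xs"
    unfolding opt_cost_def
  proof (rule antisym)
    show "(INF x \<in> {x. \<forall>t\<in>{1..T}. x t \<in> X}. cost \<beta> T x0 fs x) \<le> cost \<beta> T x0 fs xs"
    proof (rule cINF_lower)
      show "bdd_below (cost \<beta> T x0 fs ` {x. \<forall>t\<in>{1..T}. x t \<in> X})"
        unfolding bdd_below_def using min by blast
    qed (use xsX in simp)
    show "cost \<beta> T x0 fs xs \<le> (INF x \<in> {x. \<forall>t\<in>{1..T}. x t \<in> X}. cost \<beta> T x0 fs x)"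
    proof (rule cINF_greatest)
      show "{x. \<forall>t\<in>{1..T}. x t \<in> X} \<noteq> {}" using x0 by (auto intro!: exI[of _ "\<lambda>_. x0"])
    qed (use min in auto)
  qed
  show ?thesis using xsX opt min by (rule that)
qed

section \<open>RHGD and RHAG as gradient methods on the total cost\<close>

lemma ogd_in:
  fixes X :: "'a::euclidean_space set"
  assumes "closed X" "X \<noteq> {}" "x0 \<in> X"
  shows "ogd X fs x0 \<gamma> t \<in> X"
  using assms by (induction X fs x0 \<gamma> t rule: ogd.induct) (auto intro: closest_point_in_set)

lemma ogd_Suc:
  "n \<ge> 1 \<Longrightarrow> ogd X fs x0 \<gamma> (Suc n) = closest_point X (ogd X fs x0 \<gamma> n - \<gamma> *\<^sub>R grad (fs n) (ogd X fs x0 \<gamma> n))"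
  by (cases n) auto

declare rhgd_it.simps[simp del] rhag_it.simps[simp del]

lemma scaleR_2_diff_diff: "2 *\<^sub>R b - a - c = (b - a) - (c - (b::'a::real_vector))"
  by (simp add: scaleR_2 algebra_simps)

context
  fixes X :: "'a::euclidean_space set" and fs :: "nat \<Rightarrow> 'a \<Rightarrow> real" and x0 :: 'a
    and T W :: nat and \<beta> \<gamma> \<eta> lam :: real
begin

text \<open>Stage \<open>k\<close> of RHGD collects the iterates \<open>x_t^(t-W+k)\<close>, \<open>t \<in> {1..T}\<close>: stage \<open>0\<close> is the OGD
  initialisation and stage \<open>W\<close> the output.\<close>

definition rhgd_stage :: "nat \<Rightarrow> nat \<Rightarrow> 'a" where
  "rhgd_stage k t =
    (if t \<in> {1..T} then rhgd_it X fs x0 T W \<beta> \<gamma> \<eta> t (int t - int W + int k) else 0)"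

lemma rhgd_stage_0: "t \<in> {1..T} \<Longrightarrow> rhgd_stage 0 t = ogd X fs x0 \<gamma> t"
  unfolding rhgd_stage_def by (subst rhgd_it.simps) auto

lemma RHGD_eq_rhgd_stage: "t \<in> {1..T} \<Longrightarrow> RHGD X x0 T W \<beta> \<gamma> \<eta> fs t = rhgd_stage W t"
  unfolding rhgd_stage_def RHGD_def by simp

lemma rhgd_stage_Suc:
  assumes t: "t \<in> {1..T}"
  shows "rhgd_stage (Suc k) t
    = closest_point X (rhgd_stage k t - \<eta> *\<^sub>R cost_grad fs x0 T \<beta> (rhgd_stage k) t)"
proof -
  define s where "s = int t - int W + int (Suc k)"
  have prev: "rhgd_it X fs x0 T W \<beta> \<gamma> \<eta> (t - 1) (s - 2)
      = (if t = 1 then x0 else rhgd_stage k (t - 1))"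
  proof (cases "t = 1")
    case True then show ?thesis by (subst rhgd_it.simps) simp
  next
    case False
    then have s2: "s - 2 = int (t - 1) - int W + int k" using t by (simp add: s_def of_nat_diff)
    have "t - 1 \<in> {1..T}" using t False by auto
    then show ?thesis unfolding s2 rhgd_stage_def using False by simp
  qed
  have s1: "s - 1 = int t - int W + int k" and s0: "s = int (t + 1) - int W + int k"
    by (simp_all add: s_def)
  have cur: "rhgd_it X fs x0 T W \<beta> \<gamma> \<eta> t (s - 1) = rhgd_stage k t"
    unfolding s1 rhgd_stage_def using t by simp
  have following: "t < T \<Longrightarrow> rhgd_it X fs x0 T W \<beta> \<gamma> \<eta> (t + 1) s = rhgd_stage k (t + 1)"
    unfolding rhgd_stage_def using t by (subst s0) simp
  have g: "(if t = T then grad (fs t) (rhgd_stage k t) + \<beta> *\<^sub>R (rhgd_stage k t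
         - (if t = 1 then x0 else rhgd_stage k (t - 1)))
       else grad (fs t) (rhgd_stage k t) + \<beta> *\<^sub>R (2 *\<^sub>R rhgd_stage k t
         - (if t = 1 then x0 else rhgd_stage k (t - 1)) - rhgd_it X fs x0 T W \<beta> \<gamma> \<eta> (t + 1) s))
     = cost_grad fs x0 T \<beta> (rhgd_stage k) t"
  proof (cases "t = T")
    case False
    then have "t < T" using t by auto
    then show ?thesis using False unfolding scaleR_2_diff_diff following[OF \<open>t < T\<close>]
      by (simp add: cost_grad_def)
  qed (simp add: cost_grad_def)
  have nc: "\<not> (t = 0 \<or> T < t)" "\<not> s \<le> int t - int W" using t by (auto simp: s_def)
  have "rhgd_it X fs x0 T W \<beta> \<gamma> \<eta> t s
      = closest_point X (rhgd_stage k t - \<eta> *\<^sub>R cost_grad fs x0 T \<beta> (rhgd_stage k) t)"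
    by (subst rhgd_it.simps) (simp only: Let_def prev cur if_not_P[OF nc(1)] if_not_P[OF nc(2)] g)
  then show ?thesis using t by (simp add: rhgd_stage_def s_def)
qed

lemma rhgd_stage_in:
  assumes "closed X" "X \<noteq> {}" "x0 \<in> X" "t \<in> {1..T}"
  shows "rhgd_stage k t \<in> X"
  using assms ogd_in[OF assms(1-3)]
  by (cases k) (auto simp: rhgd_stage_0 rhgd_stage_Suc intro: closest_point_in_set)

definition rhag_stage_x :: "nat \<Rightarrow> nat \<Rightarrow> 'a" where
  "rhag_stage_x k t = (if t \<in> {1..T}
     then fst (rhag_it X fs x0 T W \<beta> \<gamma> \<eta> lam t (int t - int W + int k)) else 0)"

definition rhag_stage_y :: "nat \<Rightarrow> nat \<Rightarrow> 'a" where
  "rhag_stage_y k t = (if t \<in> {1..T}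
     then snd (rhag_it X fs x0 T W \<beta> \<gamma> \<eta> lam t (int t - int W + int k)) else 0)"

lemma rhag_stage_x_0: "t \<in> {1..T} \<Longrightarrow> rhag_stage_x 0 t = ogd X fs x0 \<gamma> t"
  unfolding rhag_stage_x_def by (subst rhag_it.simps) auto

lemma rhag_stage_y_0: "rhag_stage_y 0 = rhag_stage_x 0"
  unfolding rhag_stage_x_def rhag_stage_y_def fun_eq_iff by (subst (1 2) rhag_it.simps) auto

lemma rhag_stage_Suc:
  assumes t: "t \<in> {1..T}"
  shows "rhag_stage_x (Suc k) t
      = closest_point X (rhag_stage_y k t - \<eta> *\<^sub>R cost_grad fs x0 T \<beta> (rhag_stage_y k) t)"
    and "rhag_stage_y (Suc k) t = (1 + lam) *\<^sub>R rhag_stage_x (Suc k) t - lam *\<^sub>R rhag_stage_x k t"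
proof -
  define s where "s = int t - int W + int (Suc k)"
  have prev: "snd (rhag_it X fs x0 T W \<beta> \<gamma> \<eta> lam (t - 1) (s - 2))
      = (if t = 1 then x0 else rhag_stage_y k (t - 1))"
  proof (cases "t = 1")
    case True then show ?thesis by (subst rhag_it.simps) simp
  next
    case False
    then have s2: "s - 2 = int (t - 1) - int W + int k" using t by (simp add: s_def of_nat_diff)
    have "t - 1 \<in> {1..T}" using t False by auto
    then show ?thesis unfolding s2 rhag_stage_y_def using False by simp
  qed
  have s1: "s - 1 = int t - int W + int k" and s0: "s = int (t + 1) - int W + int k"
    by (simp_all add: s_def)
  have cur_y: "snd (rhag_it X fs x0 T W \<beta> \<gamma> \<eta> lam t (s - 1)) = rhag_stage_y k t"
    and cur_x: "fst (rhag_it X fs x0 T W \<beta> \<gamma> \<eta> lam t (s - 1)) = rhag_stage_x k t"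
    unfolding s1 rhag_stage_x_def rhag_stage_y_def using t by simp_all
  have following: "t < T \<Longrightarrow> snd (rhag_it X fs x0 T W \<beta> \<gamma> \<eta> lam (t + 1) s) = rhag_stage_y k (t + 1)"
    unfolding rhag_stage_y_def using t by (subst s0) simp
  have g: "(if t = T then grad (fs t) (rhag_stage_y k t) + \<beta> *\<^sub>R (rhag_stage_y k t
         - (if t = 1 then x0 else rhag_stage_y k (t - 1)))
       else grad (fs t) (rhag_stage_y k t) + \<beta> *\<^sub>R (2 *\<^sub>R rhag_stage_y k t
         - (if t = 1 then x0 else rhag_stage_y k (t - 1))
         - snd (rhag_it X fs x0 T W \<beta> \<gamma> \<eta> lam (t + 1) s)))
     = cost_grad fs x0 T \<beta> (rhag_stage_y k) t"
  proof (cases "t = T")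
    case False
    then have "t < T" using t by auto
    then show ?thesis using False unfolding scaleR_2_diff_diff following[OF \<open>t < T\<close>]
      by (simp add: cost_grad_def)
  qed (simp add: cost_grad_def)
  have nc: "\<not> (t = 0 \<or> T < t)" "\<not> s \<le> int t - int W" using t by (auto simp: s_def)
  have eq: "rhag_it X fs x0 T W \<beta> \<gamma> \<eta> lam t s =
     (closest_point X (rhag_stage_y k t - \<eta> *\<^sub>R cost_grad fs x0 T \<beta> (rhag_stage_y k) t),
      (1 + lam) *\<^sub>R closest_point X (rhag_stage_y k t - \<eta> *\<^sub>R cost_grad fs x0 T \<beta> (rhag_stage_y k) t)
        - lam *\<^sub>R rhag_stage_x k t)"
    by (subst rhag_it.simps) (simp only: Let_def prev cur_x cur_y if_not_P[OF nc(1)] if_not_P[OF nc(2)] g)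
  show "rhag_stage_x (Suc k) t
      = closest_point X (rhag_stage_y k t - \<eta> *\<^sub>R cost_grad fs x0 T \<beta> (rhag_stage_y k) t)"
    using t eq by (simp add: rhag_stage_x_def s_def)
  show "rhag_stage_y (Suc k) t = (1 + lam) *\<^sub>R rhag_stage_x (Suc k) t - lam *\<^sub>R rhag_stage_x k t"
    using t eq by (simp add: rhag_stage_x_def rhag_stage_y_def s_def)
qed

lemma rhag_stage_x_in:
  assumes "closed X" "X \<noteq> {}" "x0 \<in> X" "t \<in> {1..T}"
  shows "rhag_stage_x k t \<in> X"
  using assms ogd_in[OF assms(1-3)]
  by (cases k) (auto simp: rhag_stage_x_0 rhag_stage_Suc intro: closest_point_in_set)

lemma rhag_stage_y_Suc:
  "rhag_stage_y (Suc k) = (1 + lam) *\<^sub>R rhag_stage_x (Suc k) - lam *\<^sub>R rhag_stage_x k"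
proof
  fix t
  show "rhag_stage_y (Suc k) t = ((1 + lam) *\<^sub>R rhag_stage_x (Suc k) - lam *\<^sub>R rhag_stage_x k) t"
    using rhag_stage_Suc(2)[of t k] by (cases "t \<in> {1..T}") (auto simp: rhag_stage_x_def rhag_stage_y_def)
qed

end

lemma RHAG_eq_rhag_stage_x: "t \<in> {1..T} \<Longrightarrow> RHAG X x0 T W \<beta> \<gamma> \<eta> \<alpha> fs t
   = rhag_stage_x X fs x0 T W \<beta> \<gamma> \<eta> ((1 - sqrt (\<alpha> * \<eta>)) / (1 + sqrt (\<alpha> * \<eta>))) W t"
  unfolding rhag_stage_x_def RHAG_def by simp

section \<open>Online gradient descent tracks the minimisers\<close>

lemma projected_gradient_contraction:
  fixes X :: "'a::euclidean_space set"
  assumes f: "f \<in> Fclass X \<alpha> l G" and X: "convex X" "closed X"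
    and \<theta>: "\<theta> \<in> X" "\<forall>y\<in>X. f \<theta> \<le> f y" and \<alpha>: "0 < \<alpha>" "\<alpha> \<le> l"
  shows "norm (closest_point X (x - (1 / l) *\<^sub>R grad f x) - \<theta>) \<le> sqrt (1 - \<alpha> / l) * norm (x - \<theta>)"
proof -
  define xp where "xp = closest_point X (x - (1 / l) *\<^sub>R grad f x)"
  have l: "l > 0" using \<alpha> by simp
  have xpX: "xp \<in> X" unfolding xp_def using X \<theta> by (intro closest_point_in_set) auto
  have "f \<theta> \<ge> f xp + (l *\<^sub>R (x - xp)) \<bullet> (\<theta> - x) + (l *\<^sub>R (x - xp)) \<bullet> (l *\<^sub>R (x - xp)) / (2 * l)
           + \<alpha> / 2 * ((\<theta> - x) \<bullet> (\<theta> - x))"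
  proof (rule inner.projected_gradient_ineq)
    show "f x + grad f x \<bullet> (\<theta> - x) + \<alpha> / 2 * ((\<theta> - x) \<bullet> (\<theta> - x)) \<le> f \<theta>"
      using FclassD(1)[OF f, of x \<theta>] by (simp add: power2_norm_eq_inner)
    show "f xp \<le> f x + grad f x \<bullet> (xp - x) + l / 2 * ((xp - x) \<bullet> (xp - x))"
      using FclassD(2)[OF f, of xp x] by (simp add: power2_norm_eq_inner)
    show "(x - (1 / l) *\<^sub>R grad f x - xp) \<bullet> (\<theta> - xp) \<le> 0"
      unfolding xp_def using X \<theta>
      by (intro any_closest_point_dot) (auto intro: closest_point_in_set closest_point_le)
  qed (rule l)
  then have "(xp - \<theta>) \<bullet> (xp - \<theta>) \<le> (1 - \<alpha> / l) * ((x - \<theta>) \<bullet> (x - \<theta>)) - (2 / l) * (f xp - f \<theta>)"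
    by (rule inner.projected_gradient_dist_decrease[OF l _ refl])
  also have "\<dots> \<le> (1 - \<alpha> / l) * ((x - \<theta>) \<bullet> (x - \<theta>))"
    using \<theta> xpX l by simp
  finally have "(norm (xp - \<theta>))\<^sup>2 \<le> (sqrt (1 - \<alpha> / l) * norm (x - \<theta>))\<^sup>2"
    using \<alpha> by (simp add: power2_norm_eq_inner power_mult_distrib)
  moreover have "0 \<le> sqrt (1 - \<alpha> / l) * norm (x - \<theta>)" using \<alpha> by simp
  ultimately show ?thesis unfolding xp_def[symmetric] using power2_le_imp_le by blast
qed

lemma Fclass_diff_le:
  assumes f: "f \<in> Fclass X \<alpha> l G" and "0 \<le> \<alpha>" and x: "x \<in> X"
  shows "f x - f y \<le> G * norm (x - y)"
proof -
  have "0 \<le> \<alpha> / 2 * (norm (y - x))\<^sup>2" using assms(2) by simp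
  then have "f x - f y \<le> grad f x \<bullet> (x - y)"
    using FclassD(1)[OF f, of x y] by (simp add: inner_diff_right)
  also have "\<dots> \<le> norm (grad f x) * norm (x - y)" by (rule norm_cauchy_schwarz)
  also have "\<dots> \<le> G * norm (x - y)" using FclassD(3)[OF f x] by (simp add: mult_right_mono)
  finally show ?thesis .
qed

lemma arg_min_on_Fclass:
  fixes X :: "'a::euclidean_space set"
  assumes X: "compact X" "X \<noteq> {}" and f: "f \<in> Fclass X \<alpha> l G"
  shows "arg_min_on f X \<in> X" and "\<forall>y\<in>X. f (arg_min_on f X) \<le> f y"
proof -
  obtain m where "m \<in> X" "\<forall>y\<in>X. f m \<le> f y"
    using continuous_attains_inf[OF X] continuous_on_subset[OF FclassD(4)[OF f] subset_UNIV] by blast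
  then have "\<exists>x. is_arg_min f (\<lambda>x. x \<in> X) x"
    by (auto simp: is_arg_min_linorder)
  then have "is_arg_min f (\<lambda>x. x \<in> X) (arg_min_on f X)"
    unfolding arg_min_on_def arg_min_def by (rule someI_ex)
  then show "arg_min_on f X \<in> X" "\<forall>y\<in>X. f (arg_min_on f X) \<le> f y"
    by (auto simp: is_arg_min_linorder)
qed

context
  fixes X :: "'a::euclidean_space set" and x0 :: 'a and fs :: "nat \<Rightarrow> 'a \<Rightarrow> real"
    and T :: nat and \<alpha> l G :: real
  assumes X: "compact X" "convex X" "X \<noteq> {}" and x0: "x0 \<in> X"
    and \<alpha>: "0 < \<alpha>" "\<alpha> \<le> l" and Fc: "\<forall>t\<in>{1..T}. fs t \<in> Fclass X \<alpha> l G"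
begin

lemma theta_min:
  assumes "t \<in> {1..T}"
  shows "theta X x0 fs t \<in> X" and "\<forall>y\<in>X. fs t (theta X x0 fs t) \<le> fs t y"
proof -
  have "fs t \<in> Fclass X \<alpha> l G" using Fc assms by auto
  from arg_min_on_Fclass[OF X(1,3) this] assms
  show "theta X x0 fs t \<in> X" "\<forall>y\<in>X. fs t (theta X x0 fs t) \<le> fs t y"
    by (simp_all add: theta_def)
qed

lemma ogd_tracking_contraction:
  assumes n: "n \<in> {1..T}"
  shows "norm (ogd X fs x0 (1 / l) (Suc n) - theta X x0 fs n)
    \<le> sqrt (1 - \<alpha> / l) * norm (ogd X fs x0 (1 / l) n - theta X x0 fs n)"
proof -
  have "fs n \<in> Fclass X \<alpha> l G" using Fc n by auto
  from projected_gradient_contraction[OF this X(2) compact_imp_closed[OF X(1)] theta_min[OF n] \<alpha>]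
  show ?thesis using n by (simp add: ogd_Suc)
qed

lemma sum_ogd_tracking_error_le:
  "(1 - sqrt (1 - \<alpha> / l)) * (\<Sum>t=1..T. norm (ogd X fs x0 (1 / l) t - theta X x0 fs t))
    \<le> (\<Sum>t=1..T. norm (theta X x0 fs t - theta X x0 fs (t - 1)))"
proof -
  define \<kappa> where "\<kappa> = sqrt (1 - \<alpha> / l)"
  define e where "e t = norm (ogd X fs x0 (1 / l) t - theta X x0 fs t)" for t
  define d where "d t = norm (theta X x0 fs t - theta X x0 fs (t - 1))" for t
  have e0: "e 0 = 0" by (simp add: e_def theta_def)
  have step: "e (Suc n) \<le> \<kappa> * e n + d (Suc n)" if "Suc n \<le> T" for n
  proof (cases "n = 0")
    case True
    then show ?thesis by (simp add: e_def d_def theta_def norm_minus_commute)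
  next
    case False
    then have n: "n \<in> {1..T}" using that by auto
    have "e (Suc n) \<le> norm (ogd X fs x0 (1 / l) (Suc n) - theta X x0 fs n) + d (Suc n)"
      unfolding e_def d_def
      by (rule norm_diff_triangle_le[of _ "theta X x0 fs n"]) (simp_all add: norm_minus_commute)
    also have "\<dots> \<le> \<kappa> * e n + d (Suc n)"
      using ogd_tracking_contraction[OF n] by (simp add: e_def \<kappa>_def)
    finally show ?thesis .
  qed
  have sum_le: "(1 - \<kappa>) * (\<Sum>t=1..n. e t) + \<kappa> * e n \<le> (\<Sum>t=1..n. d t)" if "n \<le> T" for n
    using that
  proof (induction n)
    case 0 then show ?case using e0 by simp
  next
    case (Suc n)
    then have "(1 - \<kappa>) * (\<Sum>t=1..Suc n. e t) + \<kappa> * e (Suc n)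
        = (1 - \<kappa>) * (\<Sum>t=1..n. e t) + \<kappa> * e n - \<kappa> * e n + e (Suc n)"
      by (simp add: algebra_simps)
    also have "\<dots> \<le> (\<Sum>t=1..n. d t) + d (Suc n)" using Suc step[OF Suc.prems] by simp
    finally show ?case by simp
  qed
  moreover have "0 \<le> \<kappa> * e T" using \<alpha> by (simp add: \<kappa>_def e_def)
  ultimately have "(1 - \<kappa>) * (\<Sum>t=1..T. e t) \<le> (\<Sum>t=1..T. d t)"
    using sum_le[of T] by linarith
  then show ?thesis by (simp add: \<kappa>_def e_def d_def)
qed

text \<open>The movement of OGD is bounded twice: by the gradient step, \<open>G/l\<close>, and by the tracking
  error, \<open>2 |x_(t-1) - \<theta>_(t-1)|\<close>; its square is bounded by their product.\<close>

lemma ogd_step_sq_le: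
  assumes t: "t \<in> {1..T}"
  shows "(norm (ogd X fs x0 (1 / l) t - (if t = 1 then x0 else ogd X fs x0 (1 / l) (t - 1))))\<^sup>2
    \<le> 2 * G / l * norm (ogd X fs x0 (1 / l) (t - 1) - theta X x0 fs (t - 1))"
proof (cases "t = 1")
  case False
  then obtain n where tn: "t = Suc n" and n: "n \<in> {1..T}" using t by (cases t) auto
  define ox where "ox = ogd X fs x0 (1 / l)"
  define e where "e = norm (ox n - theta X x0 fs n)"
  have l: "l > 0" using \<alpha> by simp
  have oX: "ox n \<in> X" unfolding ox_def using X x0 by (intro ogd_in compact_imp_closed) auto
  have "ox t = closest_point X (ox n - (1 / l) *\<^sub>R grad (fs n) (ox n))"
    using n by (simp add: tn ox_def ogd_Suc)
  then have "norm (ox t - ox n)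
      = norm (closest_point X (ox n - (1 / l) *\<^sub>R grad (fs n) (ox n)) - closest_point X (ox n))"
    by (simp only: closest_point_self[OF oX])
  also have "\<dots> \<le> norm ((ox n - (1 / l) *\<^sub>R grad (fs n) (ox n)) - ox n)"
    using closest_point_lipschitz[OF X(2) compact_imp_closed[OF X(1)] X(3)] unfolding dist_norm by blast
  also have "\<dots> = norm (grad (fs n) (ox n)) / l" using l by simp
  also have "\<dots> \<le> G / l"
    using FclassD(3)[of "fs n" X \<alpha> l G "ox n"] Fc n oX l by (simp add: divide_right_mono)
  finally have by_grad: "norm (ox t - ox n) \<le> G / l" .
  have Gl: "0 \<le> G / l" using by_grad by (meson norm_ge_zero order_trans)
  have "norm (ox t - ox n) \<le> norm (ox t - theta X x0 fs n) + e"
    unfolding e_def by (metis norm_diff_triangle_le norm_minus_commute order_refl)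
  also have "\<dots> \<le> 2 * e"
    using ogd_tracking_contraction[OF n] \<alpha> mult_left_le_one_le[of e "sqrt (1 - \<alpha> / l)"]
    by (simp add: tn ox_def e_def)
  finally have "(norm (ox t - ox n))\<^sup>2 \<le> G / l * (2 * e)"
    unfolding power2_eq_square using by_grad Gl by (intro mult_mono) auto
  then show ?thesis using False tn by (simp add: ox_def e_def mult.assoc mult.left_commute)
qed (use \<alpha> in \<open>simp add: theta_def\<close>)

lemma sum_theta_le_cost:
  assumes \<beta>: "\<beta> \<ge> 0" and xsX: "\<forall>t\<in>{1..T}. xs t \<in> X"
  shows "(\<Sum>t=1..T. fs t (theta X x0 fs t)) \<le> cost \<beta> T x0 fs xs"
  unfolding cost_altdef
proof (intro sum_mono)
  fix t assume t: "t \<in> {1..T}"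
  have "0 \<le> \<beta> / 2 * (norm (xs t - (if t = 1 then x0 else xs (t - 1))))\<^sup>2" using \<beta> by simp
  then show "fs t (theta X x0 fs t)
      \<le> fs t (xs t) + \<beta> / 2 * (norm (xs t - (if t = 1 then x0 else xs (t - 1))))\<^sup>2"
    using theta_min(2)[OF t] xsX t by fastforce
qed

lemma ogd_cost_gap_le:
  assumes \<beta>: "\<beta> \<ge> 0" and G: "G \<ge> 0" and xsX: "\<forall>t\<in>{1..T}. xs t \<in> X"
  shows "cost \<beta> T x0 fs (ogd X fs x0 (1 / l)) - cost \<beta> T x0 fs xs
    \<le> (\<beta> / l + 1) * (G / (1 - sqrt (1 - \<alpha> / l)))
        * (\<Sum>t=1..T. norm (theta X x0 fs t - theta X x0 fs (t - 1)))"
proof -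
  define ox where "ox = ogd X fs x0 (1 / l)"
  define e where "e t = norm (ox t - theta X x0 fs t)" for t
  have l: "l > 0" using \<alpha> by simp
  have "cost \<beta> T x0 fs ox - (\<Sum>t=1..T. fs t (theta X x0 fs t))
      = (\<Sum>t=1..T. (fs t (ox t) - fs t (theta X x0 fs t))
          + \<beta> / 2 * (norm (ox t - (if t = 1 then x0 else ox (t - 1))))\<^sup>2)"
    unfolding cost_altdef by (simp add: sum_subtractf[symmetric] algebra_simps)
  also have "\<dots> \<le> (\<Sum>t=1..T. G * e t + \<beta> * G / l * e (t - 1))"
  proof (intro sum_mono add_mono)
    fix t assume t: "t \<in> {1..T}"
    have "ox t \<in> X" unfolding ox_def using X x0 by (intro ogd_in compact_imp_closed) auto
    then show "fs t (ox t) - fs t (theta X x0 fs t) \<le> G * e t"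
      unfolding e_def using Fc t \<alpha> by (intro Fclass_diff_le) auto
    have "\<beta> / 2 * (norm (ox t - (if t = 1 then x0 else ox (t - 1))))\<^sup>2
        \<le> \<beta> / 2 * (2 * G / l * e (t - 1))"
      using ogd_step_sq_le[OF t] \<beta> unfolding ox_def e_def by (intro mult_left_mono) auto
    then show "\<beta> / 2 * (norm (ox t - (if t = 1 then x0 else ox (t - 1))))\<^sup>2 \<le> \<beta> * G / l * e (t - 1)"
      by (simp add: field_simps)
  qed
  also have "\<dots> \<le> (\<beta> / l + 1) * G * (\<Sum>t=1..T. e t)"
  proof -
    have "(\<Sum>t=1..T. e (t - 1)) \<le> (\<Sum>t=1..T. e t)"
      by (rule sum_prev_le) (simp_all add: e_def ox_def theta_def)
    then have "\<beta> * G / l * (\<Sum>t=1..T. e (t - 1)) \<le> \<beta> * G / l * (\<Sum>t=1..T. e t)"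
      using \<beta> G l by (intro mult_left_mono) auto
    then show ?thesis by (simp add: sum.distrib sum_distrib_left algebra_simps)
  qed
  also have "\<dots> \<le> (\<beta> / l + 1) * (G / (1 - sqrt (1 - \<alpha> / l)))
        * (\<Sum>t=1..T. norm (theta X x0 fs t - theta X x0 fs (t - 1)))"
  proof -
    have "sqrt (1 - \<alpha> / l) < 1" using \<alpha> by simp
    then have "(\<Sum>t=1..T. e t) \<le> (\<Sum>t=1..T. norm (theta X x0 fs t - theta X x0 fs (t - 1)))
        / (1 - sqrt (1 - \<alpha> / l))"
      using sum_ogd_tracking_error_le by (simp add: e_def ox_def field_simps)
    then have "(\<beta> / l + 1) * G * (\<Sum>t=1..T. e t) \<le> (\<beta> / l + 1) * G
        * ((\<Sum>t=1..T. norm (theta X x0 fs t - theta X x0 fs (t - 1))) / (1 - sqrt (1 - \<alpha> / l)))"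
      using \<beta> G l by (intro mult_left_mono) auto
    then show ?thesis by (simp add: ac_simps)
  qed
  moreover have "(\<Sum>t=1..T. fs t (theta X x0 fs t)) \<le> cost \<beta> T x0 fs xs"
    using \<beta> xsX by (rule sum_theta_le_cost)
  ultimately show ?thesis unfolding ox_def by linarith
qed

end

section \<open>Convergence rates\<close>

lemma projected_gradient_rate:
  fixes r c :: "nat \<Rightarrow> real"
  assumes L: "L > 0" and \<alpha>: "0 < \<alpha>" "\<alpha> \<le> L"
    and step: "\<And>k. r (Suc k) \<le> (1 - \<alpha> / L) * r k - (2 / L) * c (Suc k)"
    and c: "\<And>k. c k \<ge> 0" and r: "\<And>k. r k \<ge> 0" and r0: "r 0 \<le> (2 / \<alpha>) * c 0"
  shows "c n \<le> (L / \<alpha>) * (1 - \<alpha> / L) ^ n * c 0"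
proof (cases n)
  case 0
  have "1 * c 0 \<le> (L / \<alpha>) * c 0" using \<alpha> c[of 0] by (intro mult_right_mono) auto
  then show ?thesis using 0 by simp
next
  case (Suc m)
  define \<rho> where "\<rho> = 1 - \<alpha> / L"
  have \<rho>: "0 \<le> \<rho>" using \<alpha> L by (simp add: \<rho>_def)
  have step': "r (Suc k) \<le> \<rho> * r k - (2 / L) * c (Suc k)" for k using step[of k] by (simp add: \<rho>_def)
  have r_le: "r k \<le> \<rho> ^ k * r 0" for k
  proof (induction k)
    case (Suc k)
    have "0 \<le> (2 / L) * c (Suc k)" using c[of "Suc k"] L by simp
    then have "r (Suc k) \<le> \<rho> * r k" using step'[of k] by linarith
    also have "\<dots> \<le> \<rho> * (\<rho> ^ k * r 0)" using Suc \<rho> by (intro mult_left_mono) auto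
    finally show ?case by simp
  qed simp
  have "(2 / L) * c n \<le> \<rho> * r m" using step'[of m] r[of n] Suc by simp
  also have "\<dots> \<le> \<rho> * (\<rho> ^ m * ((2 / \<alpha>) * c 0))"
    using order_trans[OF r_le[of m] mult_left_mono[OF r0 zero_le_power[OF \<rho>]]] \<rho>
    by (rule mult_left_mono)
  finally have "(2 / L) * c n \<le> \<rho> ^ n * ((2 / \<alpha>) * c 0)" using Suc by simp
  then have "(L / 2) * ((2 / L) * c n) \<le> (L / 2) * (\<rho> ^ n * ((2 / \<alpha>) * c 0))"
    using L by (intro mult_left_mono) auto
  then show ?thesis using L \<alpha> by (simp add: \<rho>_def field_simps)
qed

lemma geometric_decay:
  fixes \<Phi> :: "nat \<Rightarrow> real"
  assumes q: "q \<le> 1" and step: "\<And>k. \<Phi> (Suc k) \<le> (1 - q) * \<Phi> k"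
  shows "\<Phi> n \<le> (1 - q) ^ n * \<Phi> 0"
proof (induction n)
  case (Suc n)
  have "\<Phi> (Suc n) \<le> (1 - q) * \<Phi> n" by (rule step)
  also have "\<dots> \<le> (1 - q) * ((1 - q) ^ n * \<Phi> 0)" using Suc q by (intro mult_left_mono) auto
  finally show ?case by simp
qed simp

lemma fun_euclidean_eqI:
  fixes f g :: "'b \<Rightarrow> 'a::euclidean_space"
  assumes "\<And>t i. i \<in> Basis \<Longrightarrow> f t \<bullet> i = g t \<bullet> i"
  shows "f = g"
  using assms by (simp add: fun_eq_iff euclidean_eq_iff[where 'a='a])

text \<open>The estimate point of Nesterov's method is \<open>v = ((1 + q) y - x) / q\<close>. The next two identities
  are the hypotheses \<open>hz\<close> and \<open>hv\<close> of \<open>accelerated_gradient_step\<close> for this choice, the second one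
  with momentum \<open>lam = (1 - q) / (1 + q)\<close>.\<close>

lemma estimate_point_combination:
  fixes xk y v xs :: "'b \<Rightarrow> 'a::euclidean_space"
  assumes q: "q \<noteq> 0" and v: "v = (1 / q) *\<^sub>R ((1 + q) *\<^sub>R y - xk)"
  shows "(1 - q) *\<^sub>R (xk - y) + q *\<^sub>R (xs - y) + q *\<^sub>R ((1 - q) *\<^sub>R (v - xs) + q *\<^sub>R (y - xs)) = 0"
  using q unfolding v by (intro fun_euclidean_eqI) (simp add: inner_simps field_simps)

lemma estimate_point_update:
  fixes xk y xp xs :: "'b \<Rightarrow> 'a::euclidean_space"
  assumes q: "0 < q" and L: "L > 0" and \<alpha>: "\<alpha> = q^2 * L" and lam: "lam = (1 - q) / (1 + q)"
  shows "(1 / q) *\<^sub>R ((1 + q) *\<^sub>R ((1 + lam) *\<^sub>R xp - lam *\<^sub>R xk) - xp) - xs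
    = ((1 - q) *\<^sub>R ((1 / q) *\<^sub>R ((1 + q) *\<^sub>R y - xk) - xs) + q *\<^sub>R (y - xs))
      - (q / \<alpha>) *\<^sub>R (L *\<^sub>R (y - xp))"
proof -
  have "(1 + q) * (1 + lam) = 2" and "(1 + q) * lam = 1 - q"
    using q unfolding lam by (simp_all add: field_simps)
  then have momentum: "(1 + q) *\<^sub>R ((1 + lam) *\<^sub>R xp - lam *\<^sub>R xk) = 2 *\<^sub>R xp - (1 - q) *\<^sub>R xk"
    by (simp only: scaleR_right_diff_distrib scaleR_scaleR)
  have "q / \<alpha> * L = 1 / q" using q L unfolding \<alpha> by (simp add: field_simps power2_eq_square)
  then have step: "(q / \<alpha>) *\<^sub>R (L *\<^sub>R (y - xp)) = (1 / q) *\<^sub>R (y - xp)" by simp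
  show ?thesis unfolding momentum step
    using q by (intro fun_euclidean_eqI) (simp add: inner_simps field_simps)
qed

context
  fixes X :: "'a::euclidean_space set" and x0 :: 'a and fs :: "nat \<Rightarrow> 'a \<Rightarrow> real"
    and T W :: nat and \<beta> \<alpha> l G :: real and xs :: "nat \<Rightarrow> 'a"
  assumes X: "X \<noteq> {}" "compact X" "convex X" and x0: "x0 \<in> X"
    and \<beta>: "\<beta> \<ge> 0" and \<alpha>: "0 < \<alpha>" "\<alpha> \<le> l"
    and Fc: "\<forall>t\<in>{1..T}. fs t \<in> Fclass X \<alpha> l G"
    and xsX: "\<forall>t\<in>{1..T}. xs t \<in> X"
    and xs_min: "\<And>z. \<forall>t\<in>{1..T}. z t \<in> X \<Longrightarrow> cost \<beta> T x0 fs xs \<le> cost \<beta> T x0 fs z"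
begin

lemma closed_X: "closed X"
  using X by (simp add: compact_imp_closed)

lemma L_pos: "l + 4 * \<beta> > 0"
  using \<alpha> \<beta> by simp

text \<open>At the minimiser the projected gradient step does not move, so the term linear in \<open>z - xs\<close> of
  \<open>cost_projected_gradient_ineq\<close> vanishes.\<close>

lemma cost_quadratic_growth:
  assumes z: "\<forall>t\<in>{1..T}. z t \<in> X"
  shows "\<alpha> / 2 * traj_inner T (z - xs) (z - xs) \<le> cost \<beta> T x0 fs z - cost \<beta> T x0 fs xs"
proof -
  define P where "P t = closest_point X (xs t - (1 / (l + 4 * \<beta>)) *\<^sub>R cost_grad fs x0 T \<beta> xs t)" for t
  define g where "g = (l + 4 * \<beta>) *\<^sub>R (xs - P)"
  have P: "\<forall>t\<in>{1..T}. P t = closest_point X (xs t - (1 / (l + 4 * \<beta>)) *\<^sub>R cost_grad fs x0 T \<beta> xs t)"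
    by (simp add: P_def)
  have ineq: "cost \<beta> T x0 fs z' \<ge> cost \<beta> T x0 fs P + traj_inner T g (z' - xs)
      + traj_inner T g g / (2 * (l + 4 * \<beta>)) + \<alpha> / 2 * traj_inner T (z' - xs) (z' - xs)"
    if "\<forall>t\<in>{1..T}. z' t \<in> X" for z'
    unfolding g_def using cost_projected_gradient_ineq[OF Fc \<beta> X(3) closed_X _ that P] \<alpha> by simp
  have "cost \<beta> T x0 fs xs \<le> cost \<beta> T x0 fs P"
    using X closed_X by (intro xs_min) (auto simp: P_def intro: closest_point_in_set)
  with ineq[OF xsX] have "traj_inner T g g / (2 * (l + 4 * \<beta>)) \<le> 0"
    by (simp add: traj_inner.ip_zero_right traj_inner.ip_zero_left)
  then have "traj_inner T g g = 0"
    using L_pos traj_inner.ip_self_nonneg[of T g] by (simp add: divide_le_0_iff)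
  then show ?thesis
    using ineq[OF z] traj_inner.ip_self_eq_0D[of T g] \<open>cost \<beta> T x0 fs xs \<le> cost \<beta> T x0 fs P\<close> by simp
qed

lemma RHGD_gap_le:
  "cost \<beta> T x0 fs (RHGD X x0 T W \<beta> (1 / l) (1 / (l + 4 * \<beta>)) fs) - cost \<beta> T x0 fs xs
    \<le> ((l + 4 * \<beta>) / \<alpha>) * (1 - \<alpha> / (l + 4 * \<beta>)) ^ W
        * (cost \<beta> T x0 fs (ogd X fs x0 (1 / l)) - cost \<beta> T x0 fs xs)"
proof -
  define L where "L = l + 4 * \<beta>"
  define x where "x = rhgd_stage X fs x0 T W \<beta> (1 / l) (1 / L)"
  define r where "r k = traj_inner T (x k - xs) (x k - xs)" for k
  define c where "c k = cost \<beta> T x0 fs (x k) - cost \<beta> T x0 fs xs" for k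
  have xX: "\<forall>t\<in>{1..T}. x k t \<in> X" for k
    unfolding x_def using X x0 closed_X by (auto intro: rhgd_stage_in)
  have "c W \<le> (L / \<alpha>) * (1 - \<alpha> / L) ^ W * c 0"
  proof (rule projected_gradient_rate[where r = r])
    show "0 < L" "0 < \<alpha>" "\<alpha> \<le> L" using L_pos \<alpha> \<beta> by (auto simp: L_def)
    show "r (Suc k) \<le> (1 - \<alpha> / L) * r k - 2 / L * c (Suc k)" for k
    proof -
      have "\<forall>t\<in>{1..T}. x (Suc k) t
          = closest_point X (x k t - (1 / (l + 4 * \<beta>)) *\<^sub>R cost_grad fs x0 T \<beta> (x k) t)"
        unfolding x_def L_def using rhgd_stage_Suc by blast
      from cost_projected_gradient_ineq[OF Fc \<beta> X(3) closed_X _ xsX this]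
      have "cost \<beta> T x0 fs xs \<ge> cost \<beta> T x0 fs (x (Suc k))
          + traj_inner T ((l + 4 * \<beta>) *\<^sub>R (x k - x (Suc k))) (xs - x k)
          + traj_inner T ((l + 4 * \<beta>) *\<^sub>R (x k - x (Suc k))) ((l + 4 * \<beta>) *\<^sub>R (x k - x (Suc k)))
            / (2 * (l + 4 * \<beta>))
          + \<alpha> / 2 * traj_inner T (xs - x k) (xs - x k)"
        using \<alpha> by simp
      from traj_inner.projected_gradient_dist_decrease[OF L_pos this refl]
      show ?thesis unfolding r_def c_def L_def by simp
    qed
    show "0 \<le> c k" for k using xs_min xX by (simp add: c_def)
    show "0 \<le> r k" for k by (simp add: r_def traj_inner.ip_self_nonneg)
    show "r 0 \<le> 2 / \<alpha> * c 0"
      using cost_quadratic_growth[OF xX[of 0]] \<alpha> by (simp add: r_def c_def field_simps)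
  qed
  moreover have "cost \<beta> T x0 fs (RHGD X x0 T W \<beta> (1 / l) (1 / L) fs) = cost \<beta> T x0 fs (x W)"
    by (rule cost_cong) (simp add: RHGD_eq_rhgd_stage x_def)
  moreover have "cost \<beta> T x0 fs (x 0) = cost \<beta> T x0 fs (ogd X fs x0 (1 / l))"
    by (rule cost_cong) (simp add: rhgd_stage_0 x_def)
  ultimately show ?thesis by (simp add: c_def L_def)
qed

lemma RHAG_potential_step:
  assumes q: "q = sqrt (\<alpha> / (l + 4 * \<beta>))" and lam: "lam = (1 - q) / (1 + q)"
    and x: "x = rhag_stage_x X fs x0 T W \<beta> (1 / l) (1 / (l + 4 * \<beta>)) lam"
    and y: "y = rhag_stage_y X fs x0 T W \<beta> (1 / l) (1 / (l + 4 * \<beta>)) lam"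
    and v: "v = (\<lambda>k. (1 / q) *\<^sub>R ((1 + q) *\<^sub>R y k - x k))"
  shows "cost \<beta> T x0 fs (x (Suc k)) - cost \<beta> T x0 fs xs
           + \<alpha> / 2 * traj_inner T (v (Suc k) - xs) (v (Suc k) - xs)
    \<le> (1 - q) * (cost \<beta> T x0 fs (x k) - cost \<beta> T x0 fs xs
           + \<alpha> / 2 * traj_inner T (v k - xs) (v k - xs))"
proof -
  define L where "L = l + 4 * \<beta>"
  have L: "L > 0" using L_pos by (simp add: L_def)
  have "\<alpha> / L \<le> 1" "0 < \<alpha> / L" using \<alpha> \<beta> L by (auto simp: L_def)
  then have q0: "0 < q" and q1: "q \<le> 1" and qa: "q^2 = \<alpha> / L" by (simp_all add: q L_def)
  then have \<alpha>q: "\<alpha> = q^2 * L" using L by (simp add: field_simps)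
  have step: "\<forall>t\<in>{1..T}. x (Suc k) t
      = closest_point X (y k t - (1 / (l + 4 * \<beta>)) *\<^sub>R cost_grad fs x0 T \<beta> (y k) t)"
    unfolding x y using rhag_stage_Suc(1) by blast
  have xX: "\<forall>t\<in>{1..T}. x k t \<in> X"
    unfolding x using X x0 closed_X by (auto intro: rhag_stage_x_in)
  have l: "l > 0" using \<alpha> by simp
  note ineq = cost_projected_gradient_ineq[OF Fc \<beta> X(3) closed_X l _ step]
  have "y (Suc k) = (1 + lam) *\<^sub>R x (Suc k) - lam *\<^sub>R x k"
    unfolding x y by (rule rhag_stage_y_Suc)
  then have hv: "v (Suc k) - xs = ((1 - q) *\<^sub>R (v k - xs) + q *\<^sub>R (y k - xs))
      - (q / \<alpha>) *\<^sub>R ((l + 4 * \<beta>) *\<^sub>R (y k - x (Suc k)))"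
    unfolding v
    using estimate_point_update[OF q0 L \<alpha>q lam, of "x (Suc k)" "x k" xs "y k"] by (simp add: L_def)
  have hz: "(1 - q) *\<^sub>R (x k - y k) + q *\<^sub>R (xs - y k)
      + q *\<^sub>R ((1 - q) *\<^sub>R (v k - xs) + q *\<^sub>R (y k - xs)) = 0"
    using q0 by (intro estimate_point_combination) (auto simp: v)
  have "q^2 = \<alpha> / (l + 4 * \<beta>)" using qa by (simp add: L_def)
  from traj_inner.accelerated_gradient_step[OF L_pos q0 q1 this ineq[OF xX] ineq[OF xsX] hv hz]
  show ?thesis by simp
qed

lemma RHAG_gap_le:
  "cost \<beta> T x0 fs (RHAG X x0 T W \<beta> (1 / l) (1 / (l + 4 * \<beta>)) \<alpha> fs) - cost \<beta> T x0 fs xs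
    \<le> 2 * (1 - sqrt (\<alpha> * (1 / (l + 4 * \<beta>)))) ^ W
        * (cost \<beta> T x0 fs (ogd X fs x0 (1 / l)) - cost \<beta> T x0 fs xs)"
proof -
  define q where "q = sqrt (\<alpha> / (l + 4 * \<beta>))"
  define lam where "lam = (1 - q) / (1 + q)"
  define x where "x = rhag_stage_x X fs x0 T W \<beta> (1 / l) (1 / (l + 4 * \<beta>)) lam"
  define y where "y = rhag_stage_y X fs x0 T W \<beta> (1 / l) (1 / (l + 4 * \<beta>)) lam"
  define v where "v = (\<lambda>k. (1 / q) *\<^sub>R ((1 + q) *\<^sub>R y k - x k))"
  define \<Phi> where "\<Phi> k = cost \<beta> T x0 fs (x k) - cost \<beta> T x0 fs xs
    + \<alpha> / 2 * traj_inner T (v k - xs) (v k - xs)" for k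
  have q: "0 < q" "q \<le> 1" using \<alpha> \<beta> by (simp_all add: q_def)
  have "y 0 = x 0" unfolding x_def y_def by (rule rhag_stage_y_0)
  then have "(1 + q) *\<^sub>R y 0 - x 0 = q *\<^sub>R x 0" by (simp add: algebra_simps)
  then have "v 0 = x 0" using q by (simp add: v_def)
  moreover have "\<forall>t\<in>{1..T}. x 0 t \<in> X"
    unfolding x_def using X x0 closed_X by (auto intro: rhag_stage_x_in)
  ultimately have \<Phi>0: "\<Phi> 0 \<le> 2 * (cost \<beta> T x0 fs (x 0) - cost \<beta> T x0 fs xs)"
    using cost_quadratic_growth[of "x 0"] by (simp add: \<Phi>_def)
  have "cost \<beta> T x0 fs (x W) - cost \<beta> T x0 fs xs \<le> \<Phi> W"
    using \<alpha> traj_inner.ip_self_nonneg[of T "v W - xs"] by (simp add: \<Phi>_def)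
  also have "\<dots> \<le> (1 - q) ^ W * \<Phi> 0"
  proof (rule geometric_decay[OF q(2)])
    show "\<Phi> (Suc k) \<le> (1 - q) * \<Phi> k" for k
      unfolding \<Phi>_def by (rule RHAG_potential_step[OF q_def lam_def x_def y_def v_def])
  qed
  also have "\<dots> \<le> (1 - q) ^ W * (2 * (cost \<beta> T x0 fs (x 0) - cost \<beta> T x0 fs xs))"
    using \<Phi>0 q by (intro mult_left_mono) auto
  also have "\<dots> = 2 * (1 - q) ^ W * (cost \<beta> T x0 fs (x 0) - cost \<beta> T x0 fs xs)"
    by (simp only: mult.assoc mult.left_commute)
  finally have "cost \<beta> T x0 fs (x W) - cost \<beta> T x0 fs xs
      \<le> 2 * (1 - q) ^ W * (cost \<beta> T x0 fs (x 0) - cost \<beta> T x0 fs xs)" .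
  moreover have "cost \<beta> T x0 fs (RHAG X x0 T W \<beta> (1 / l) (1 / (l + 4 * \<beta>)) \<alpha> fs)
      = cost \<beta> T x0 fs (x W)"
    by (rule cost_cong) (simp add: RHAG_eq_rhag_stage_x x_def lam_def q_def)
  moreover have "cost \<beta> T x0 fs (x 0) = cost \<beta> T x0 fs (ogd X fs x0 (1 / l))"
    by (rule cost_cong) (simp add: rhag_stage_x_0 x_def)
  ultimately show ?thesis by (simp add: q_def)
qed

end

lemma RHGD_RHAG_cost_gap_le:
  fixes X :: "'a::euclidean_space set"
  assumes X: "X \<noteq> {}" "compact X" "convex X" and x0: "x0 \<in> X"
    and \<beta>: "\<beta> \<ge> 0" and \<alpha>: "0 < \<alpha>" "\<alpha> \<le> l" and G: "G > 0"
    and fs: "fs \<in> pathset X x0 T \<alpha> l G Lpath"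
  defines "\<delta> \<equiv> (\<beta> / l + 1) * (G / (1 - sqrt (1 - \<alpha> / l)))"
    and "Qf \<equiv> (l + 4 * \<beta>) / \<alpha>"
  shows "cost \<beta> T x0 fs (RHGD X x0 T W \<beta> (1 / l) (1 / (l + 4 * \<beta>)) fs) - opt_cost X \<beta> T x0 fs
      \<le> Qf * \<delta> * (1 - 1 / Qf) ^ W * Lpath"
    and "cost \<beta> T x0 fs (RHAG X x0 T W \<beta> (1 / l) (1 / (l + 4 * \<beta>)) \<alpha> fs) - opt_cost X \<beta> T x0 fs
      \<le> 2 * \<delta> * (1 - 1 / sqrt Qf) ^ W * Lpath"
proof -
  have Fc: "\<forall>t\<in>{1..T}. fs t \<in> Fclass X \<alpha> l G"
    and path: "(\<Sum>t=1..T. norm (theta X x0 fs t - theta X x0 fs (t - 1))) \<le> Lpath"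
    using fs by (auto simp: pathset_def)
  obtain xs where xsX: "\<forall>t\<in>{1..T}. xs t \<in> X" and opt: "opt_cost X \<beta> T x0 fs = cost \<beta> T x0 fs xs"
    and xs_min: "\<And>z. \<forall>t\<in>{1..T}. z t \<in> X \<Longrightarrow> cost \<beta> T x0 fs xs \<le> cost \<beta> T x0 fs z"
    using cost_attains_min[OF X(2) x0] FclassD(4) Fc by metis
  have "sqrt (1 - \<alpha> / l) < 1" using \<alpha> by simp
  then have "\<delta> \<ge> 0" unfolding \<delta>_def using \<beta> \<alpha> G by simp
  have "cost \<beta> T x0 fs (ogd X fs x0 (1 / l)) - cost \<beta> T x0 fs xs
      \<le> \<delta> * (\<Sum>t=1..T. norm (theta X x0 fs t - theta X x0 fs (t - 1)))"
    unfolding \<delta>_def using ogd_cost_gap_le[OF X(2,3,1) x0 \<alpha> Fc \<beta> _ xsX] G by simp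
  also have "\<dots> \<le> \<delta> * Lpath" using path \<open>\<delta> \<ge> 0\<close> by (rule mult_left_mono)
  finally have gap0: "cost \<beta> T x0 fs (ogd X fs x0 (1 / l)) - cost \<beta> T x0 fs xs \<le> \<delta> * Lpath" .
  have Qf: "Qf \<ge> 1" using \<alpha> \<beta> by (simp add: Qf_def)
  have "cost \<beta> T x0 fs (RHGD X x0 T W \<beta> (1 / l) (1 / (l + 4 * \<beta>)) fs) - opt_cost X \<beta> T x0 fs
      \<le> Qf * (1 - 1 / Qf) ^ W * (cost \<beta> T x0 fs (ogd X fs x0 (1 / l)) - cost \<beta> T x0 fs xs)"
    using RHGD_gap_le[OF X x0 \<beta> \<alpha> Fc xsX xs_min] by (simp add: opt Qf_def)
  also have "\<dots> \<le> Qf * (1 - 1 / Qf) ^ W * (\<delta> * Lpath)"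
    using gap0 Qf by (intro mult_left_mono) auto
  finally show "cost \<beta> T x0 fs (RHGD X x0 T W \<beta> (1 / l) (1 / (l + 4 * \<beta>)) fs) - opt_cost X \<beta> T x0 fs
      \<le> Qf * \<delta> * (1 - 1 / Qf) ^ W * Lpath"
    by (simp only: ac_simps)
  have "1 / sqrt Qf = sqrt (\<alpha> * (1 / (l + 4 * \<beta>)))"
    by (simp add: Qf_def real_sqrt_divide)
  then have "cost \<beta> T x0 fs (RHAG X x0 T W \<beta> (1 / l) (1 / (l + 4 * \<beta>)) \<alpha> fs) - opt_cost X \<beta> T x0 fs
      \<le> 2 * (1 - 1 / sqrt Qf) ^ W * (cost \<beta> T x0 fs (ogd X fs x0 (1 / l)) - cost \<beta> T x0 fs xs)"
    using RHAG_gap_le[OF X x0 \<beta> \<alpha> Fc xsX xs_min] by (simp add: opt)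
  also have "\<dots> \<le> 2 * (1 - 1 / sqrt Qf) ^ W * (\<delta> * Lpath)"
    using gap0 Qf by (intro mult_left_mono) auto
  finally show "cost \<beta> T x0 fs (RHAG X x0 T W \<beta> (1 / l) (1 / (l + 4 * \<beta>)) \<alpha> fs) - opt_cost X \<beta> T x0 fs
      \<le> 2 * \<delta> * (1 - 1 / sqrt Qf) ^ W * Lpath"
    by (simp only: ac_simps)
qed

theorem theorem2:
  fixes X :: "'a::euclidean_space set" and x0 :: 'a
    and D \<beta> \<alpha> l G Lpath :: real and T W :: nat
  assumes "X \<noteq> {}" and "compact X" and "convex X"
    and "\<forall>x\<in>X. \<forall>y\<in>X. norm (x - y) \<le> D"
    and "\<beta> \<ge> 0" and "x0 \<in> X" and "T \<ge> 1"
    and "0 < \<alpha>" and "\<alpha> \<le> l" and "G > 0"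
    and "0 \<le> Lpath" and "Lpath \<le> D * real T"
  defines "\<gamma> \<equiv> 1 / l"
    and "\<eta> \<equiv> 1 / (l + 4 * \<beta>)"
    and "\<delta> \<equiv> (\<beta> / l + 1) * (G / (1 - sqrt (1 - \<alpha> / l)))"
    and "Qf \<equiv> (l + 4 * \<beta>) / \<alpha>"
  shows "Reg X \<beta> T x0 \<alpha> l G Lpath (RHGD X x0 T W \<beta> \<gamma> \<eta>)
           \<le> ereal (Qf * \<delta> * (1 - 1 / Qf) ^ W * Lpath)
       \<and> Reg X \<beta> T x0 \<alpha> l G Lpath (RHAG X x0 T W \<beta> \<gamma> \<eta> \<alpha>)
           \<le> ereal (2 * \<delta> * (1 - 1 / sqrt Qf) ^ W * Lpath)"
  using RHGD_RHAG_cost_gap_le[OF assms(1-3,6,5,8-10)]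
  unfolding Reg_def \<gamma>_def \<eta>_def \<delta>_def Qf_def by (auto intro!: SUP_least)

end
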